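(* Let $1\le p<\infty$. There is a constant $c>0$ such that for all $n,M,N\in\mathbb{N}$ with $$ n\ge c\,M^{-p/2}N\max\big(\log(M^{-p}N),1\big) $$ we have $e_n^q(S'_{N,M},\mathcal{B}_p^N)=0$.
   Context: Throughout, $\log=\log_2$, $\mathbb{N}=\{1,2,\dots\}$, $\mathbb{N}_0=\mathbb{N}\cup\{0\}$, and $\mathbb{Z}[0,N)=\{0,\dots,N-1\}$. Quantum model. Let $D,K$ be nonempty sets, $F$ a nonempty set of functions $D\to K$, $G$ a normed space over $\mathbb{R}$ or $\mathbb{C}$, and $S:F\to G$. Let $H_m=(\mathbb{C}^2)^{\otimes m}$ with canonical basis $|i\rangle$, $i\in\mathbb{Z}[0,2^m)$ (via binary expansion). A quantum query is a tuple $Q=(m,m',m'',Z,\tau,\beta)$ with $m,m',m''\in\mathbb{N}$, $m'+m''\le m$, $\emptyset\ne Z\subseteq\mathbb{Z}[0,2^{m'})$, $\tau:Z\to D$, $\beta:K\to\mathbb{Z}[0,2^{m''})$. For $f\in F$ the unitary $Q_f$ on $H_m=H_{m'}\otimes H_{m''}\otimes H_{m-m'-m''}$ is given on basis states by $Q_f|i\rangle|x\rangle|y\rangle=|i\rangle|x\oplus\beta(f(\tau(i)))\rangle|y\rangle$ if $i\in Z$ and $Q_f|i\rangle|x\rangle|y\rangle=|i\rangle|x\rangle|y\rangle$ otherwise, where $\oplus$ is addition mod $2^{m''}$. A quantum algorithm with no measurement is $(Q,(U_j)_{j=0}^n)$ with $n\in\mathbb{N}_0$ and unitaries $U_j$ on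 $H_{m}$, $m=m(Q)$; it defines $A_f=U_nQ_fU_{n-1}\cdots U_1Q_fU_0$ and uses $n$ queries; $A_f(x,y)$ denotes its matrix entries in the canonical basis. A quantum algorithm from $F$ to $G$ with $k\in\mathbb{N}$ measurements is $A=((A_\ell)_{\ell=0}^{k-1},(b_\ell)_{\ell=0}^{k-1},\varphi)$, where each $A_\ell$ is an algorithm with no measurement on $m_\ell$ qubits, $b_0\in\mathbb{Z}[0,2^{m_0})$, $b_\ell:\prod_{i<\ell}\mathbb{Z}[0,2^{m_i})\to\mathbb{Z}[0,2^{m_\ell})$ for $1\le\ell\le k-1$, and $\varphi:\prod_{\ell<k}\mathbb{Z}[0,2^{m_\ell})\to G$. Its output on $f$ is the probability measure $A(f)$ on $G$ which is the distribution of $\varphi(x_0,\dots,x_{k-1})$, where $(x_0,\dots,x_{k-1})$ has probability $\prod_{\ell=0}^{k-1}|A_{\ell,f}(x_\ell,b_\ell(x_0,\dots,x_{\ell-1}))|^2$ (with $b_0$ a constant). Its number of queries is $n_q(A)=\sum_\ell n_q(A_\ell)$. For a random variable $\zeta$ with distribution $A(f)$, let $e(S,A,f)=\inf\{\varepsilon:\ \mathbf{P}\{\|S(f)-\zeta\|>\varepsilon\}\le 1/4\}$, $e(S,A,F)=\sup_{f\in F}e(S,A,f)$, and the $n$-th minimal query error is $e_n^q(S,F)=\inf\{e(S,A,F): A \text{ a quantum algorithm from } F \text{ to } G \text{ with } n_q(A)\le n\}$. Summation setting. For $N\in\mathbb{N}$, $D=\mathbb{Z}[0,N)$, $K=G=\mathbb{R}$.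 For $1\le p<\infty$, $L_p^N$ is the space of functions $f:\mathbb{Z}[0,N)\to\mathbb{R}$ with norm $\|f\|_{L_p^N}=\big(\frac1N\sum_{i=0}^{N-1}|f(i)|^p\big)^{1/p}$; $\mathcal{B}_p^N=\{f\in L_p^N:\|f\|_{L_p^N}\le 1\}$; and $S_N f=\frac1N\sum_{i=0}^{N-1}f(i)$. For $M\in\mathbb{N}$, $S_{N,M}f=\frac1N\sum_{i\in\mathbb{Z}[0,N),\,|f(i)|<M}f(i)$ and $S'_{N,M}f=S_Nf-S_{N,M}f=\frac1N\sum_{i\in\mathbb{Z}[0,N),\,|f(i)|\ge M}f(i)$. *)

theory Defs
  imports "HOL-Analysis.Analysis" "HOL-Library.Extended_Real"
begin

text \<open>A quantum query Q = (m, m', m'', Z, tau, beta). The input set D is a set of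
  elements of type 'd, the value set K is the whole type 'k.\<close>

record ('d, 'k) qquery =
  qm  :: nat
  qm1 :: nat
  qm2 :: nat
  qZ  :: "nat set"
  qtau :: "nat \<Rightarrow> 'd"
  qbeta :: "'k \<Rightarrow> nat"

definition valid_query :: "'d set \<Rightarrow> ('d, 'k) qquery \<Rightarrow> bool" where
  "valid_query D Q \<longleftrightarrow>
     qm Q \<ge> 1 \<and> qm1 Q \<ge> 1 \<and> qm2 Q \<ge> 1 \<and> qm1 Q + qm2 Q \<le> qm Q \<and>
     qZ Q \<noteq> {} \<and> qZ Q \<subseteq> {..<2 ^ qm1 Q} \<and>
     (\<forall>i\<in>qZ Q. qtau Q i \<in> D) \<and> (\<forall>k. qbeta Q k < 2 ^ qm2 Q)"

text \<open>Operators on H_m are represented by their matrices in the canonical basis,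
  as functions row => column => entry, of which only indices < 2^m are relevant.
  The basis vector |i>|x>|y> of H_m' (x) H_m'' (x) H_(m-m'-m'') has index
  i * 2^(m-m') + x * 2^(m-m'-m'') + y.\<close>

type_synonym cmatrix = "nat \<Rightarrow> nat \<Rightarrow> complex"

definition mmult :: "nat \<Rightarrow> cmatrix \<Rightarrow> cmatrix \<Rightarrow> cmatrix" where
  "mmult d A B = (\<lambda>i j. \<Sum>k<d. A i k * B k j)"

definition unitary_on :: "nat \<Rightarrow> cmatrix \<Rightarrow> bool" where
  "unitary_on d U \<longleftrightarrow>
     (\<forall>i<d. \<forall>j<d. (\<Sum>k<d. cnj (U k i) * U k j) = (if i = j then 1 else 0))"

definition query_image :: "('d, 'k) qquery \<Rightarrow> ('d \<Rightarrow> 'k) \<Rightarrow> nat \<Rightarrow> nat" where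
  "query_image Q f c =
    (let m = qm Q; m' = qm1 Q; m'' = qm2 Q;
         i = c div 2 ^ (m - m');
         x = (c div 2 ^ (m - m' - m'')) mod 2 ^ m'';
         y = c mod 2 ^ (m - m' - m'')
     in if i \<in> qZ Q
        then i * 2 ^ (m - m') + ((x + qbeta Q (f (qtau Q i))) mod 2 ^ m'') * 2 ^ (m - m' - m'') + y
        else c)"

definition query_op :: "('d, 'k) qquery \<Rightarrow> ('d \<Rightarrow> 'k) \<Rightarrow> cmatrix" where
  "query_op Q f = (\<lambda>r c. if r = query_image Q f c then 1 else 0)"

record ('d, 'k) nm_alg =
  nm_query :: "('d, 'k) qquery"
  nm_U :: "cmatrix list"

definition valid_nm_alg :: "'d set \<Rightarrow> ('d, 'k) nm_alg \<Rightarrow> bool" where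
  "valid_nm_alg D A \<longleftrightarrow> valid_query D (nm_query A) \<and> nm_U A \<noteq> [] \<and>
     (\<forall>U\<in>set (nm_U A). unitary_on (2 ^ qm (nm_query A)) U)"

definition nm_queries :: "('d, 'k) nm_alg \<Rightarrow> nat" where
  "nm_queries A = length (nm_U A) - 1"

fun run_ops :: "nat \<Rightarrow> cmatrix \<Rightarrow> cmatrix \<Rightarrow> cmatrix list \<Rightarrow> cmatrix" where
  "run_ops d Qf acc [] = acc"
| "run_ops d Qf acc (U # Us) = run_ops d Qf (mmult d U (mmult d Qf acc)) Us"

text \<open>A_f = U_n Q_f U_(n-1) ... U_1 Q_f U_0.\<close>
definition nm_run :: "('d, 'k) nm_alg \<Rightarrow> ('d \<Rightarrow> 'k) \<Rightarrow> cmatrix" where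
  "nm_run A f = run_ops (2 ^ qm (nm_query A)) (query_op (nm_query A) f)
                        (hd (nm_U A)) (tl (nm_U A))"

text \<open>((A_l)_{l<k}, (b_l)_{l<k}, phi); b l xs is b_l applied to the previous
  outcomes xs = [x_0, ..., x_(l-1)].\<close>
record ('d, 'k, 'g) qalg =
  q_algs :: "('d, 'k) nm_alg list"
  q_b :: "nat \<Rightarrow> nat list \<Rightarrow> nat"
  q_phi :: "nat list \<Rightarrow> 'g"

definition q_k :: "('d, 'k, 'g) qalg \<Rightarrow> nat" where
  "q_k A = length (q_algs A)"

definition q_qubits :: "('d, 'k, 'g) qalg \<Rightarrow> nat \<Rightarrow> nat" where
  "q_qubits A l = qm (nm_query (q_algs A ! l))"

definition prefix_outcomes :: "('d, 'k, 'g) qalg \<Rightarrow> nat \<Rightarrow> nat list set" where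
  "prefix_outcomes A l = {xs. length xs = l \<and> (\<forall>i<l. xs ! i < 2 ^ q_qubits A i)}"

definition outcomes :: "('d, 'k, 'g) qalg \<Rightarrow> nat list set" where
  "outcomes A = prefix_outcomes A (q_k A)"

definition valid_qalg :: "'d set \<Rightarrow> ('d, 'k, 'g) qalg \<Rightarrow> bool" where
  "valid_qalg D A \<longleftrightarrow> q_k A \<ge> 1 \<and>
     (\<forall>B\<in>set (q_algs A). valid_nm_alg D B) \<and>
     (\<forall>l<q_k A. \<forall>xs\<in>prefix_outcomes A l. q_b A l xs < 2 ^ q_qubits A l)"

definition n_q :: "('d, 'k, 'g) qalg \<Rightarrow> nat" where
  "n_q A = (\<Sum>l<q_k A. nm_queries (q_algs A ! l))"

definition outcome_prob :: "('d, 'k, 'g) qalg \<Rightarrow> ('d \<Rightarrow> 'k) \<Rightarrow> nat list \<Rightarrow> real" where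
  "outcome_prob A f xs =
     (\<Prod>l<q_k A. (cmod (nm_run (q_algs A ! l) f (xs ! l) (q_b A l (take l xs)))) ^ 2)"

definition q_err :: "(('d \<Rightarrow> 'k) \<Rightarrow> 'g::real_normed_vector) \<Rightarrow> ('d, 'k, 'g) qalg \<Rightarrow> ('d \<Rightarrow> 'k) \<Rightarrow> ereal" where
  "q_err S A f = Inf {ereal eps | eps.
      (\<Sum>xs\<in>{xs\<in>outcomes A. norm (S f - q_phi A xs) > eps}. outcome_prob A f xs) \<le> 1/4}"

definition q_err_F :: "(('d \<Rightarrow> 'k) \<Rightarrow> 'g::real_normed_vector) \<Rightarrow> ('d, 'k, 'g) qalg \<Rightarrow> ('d \<Rightarrow> 'k) set \<Rightarrow> ereal" where
  "q_err_F S A F = (SUP f\<in>F. q_err S A f)"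

definition min_query_err :: "'d set \<Rightarrow> nat \<Rightarrow> (('d \<Rightarrow> 'k) \<Rightarrow> 'g::real_normed_vector) \<Rightarrow> ('d \<Rightarrow> 'k) set \<Rightarrow> ereal" where
  "min_query_err D n S F = (INF A\<in>{A :: ('d, 'k, 'g) qalg. valid_qalg D A \<and> n_q A \<le> n}. q_err_F S A F)"

text \<open>Functions on Z[0,N) are represented as functions nat => real vanishing outside.\<close>
definition Lp_norm :: "real \<Rightarrow> nat \<Rightarrow> (nat \<Rightarrow> real) \<Rightarrow> real" where
  "Lp_norm p N f = ((1 / real N) * (\<Sum>i<N. \<bar>f i\<bar> powr p)) powr (1 / p)"

definition unit_ball_Lp :: "real \<Rightarrow> nat \<Rightarrow> (nat \<Rightarrow> real) set" where
  "unit_ball_Lp p N = {f. (\<forall>i\<ge>N. f i = 0) \<and> Lp_norm p N f \<le> 1}"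

definition S_NM' :: "nat \<Rightarrow> nat \<Rightarrow> (nat \<Rightarrow> real) \<Rightarrow> real" where
  "S_NM' N M f = (1 / real N) * (\<Sum>i\<in>{i. i < N \<and> \<bar>f i\<bar> \<ge> real M}. f i)"

end

theory Submission
  imports Defs "HOL-Library.Discrete_Functions"
begin

text \<open>Only indices with \<open>\<bar>f i\<bar> \<ge> M\<close> contribute to \<open>S'\<^sub>N\<^sub>,\<^sub>M f\<close>, and \<open>\<parallel>f\<parallel>\<^sub>p \<le> 1\<close> leaves room
  for at most \<open>K \<le> R = M\<^sup>-\<^sup>p N\<close> of them; if \<open>R < 1\<close> there are none and \<open>S'\<^sub>N\<^sub>,\<^sub>M\<close> vanishes on
  the ball. A query answers with a number whose lowest bit flags \<open>\<bar>f i\<bar> \<ge> M\<close> and whose higher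
  bits hold \<open>f i\<close> quantized with step \<open>\<delta>\<close>. On a value register prepared in an alternating-sign
  state this query acts as the Grover sign oracle of the flagged indices, and after the Grover
  iterations one more query writes the answer into the value register, so a measurement yields a
  flagged index together with its value. With the iteration count tuned to the dyadic scale
  \<open>2\<^sup>j \<le> K < 2\<^sup>j\<^sup>+\<^sup>1\<close>, each flagged index appears with probability at least \<open>sin\<^sup>2(1/8) / K\<close>.
  Repeating scale \<open>j\<close> about \<open>2\<^sup>j j\<close> times for every \<open>j \<le> log R\<close> finds all flagged indices with
  probability at least \<open>3/4\<close>, and then the decoded average is within \<open>\<delta>\<close> of \<open>S'\<^sub>N\<^sub>,\<^sub>M f\<close>. The
  \<open>O(sqrt (N R) log R)\<close> queries do not depend on \<open>\<delta>\<close>, so the minimal query error is \<open>0\<close>.\<close>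

section \<open>Norm preservation\<close>

definition mat_vec :: "nat \<Rightarrow> cmatrix \<Rightarrow> (nat \<Rightarrow> complex) \<Rightarrow> nat \<Rightarrow> complex" where
  "mat_vec d A v = (\<lambda>i. \<Sum>k<d. A i k * v k)"

definition sq_norm :: "nat \<Rightarrow> (nat \<Rightarrow> complex) \<Rightarrow> real" where
  "sq_norm d v = (\<Sum>i<d. (cmod (v i))\<^sup>2)"

lemma run_ops_column:
  "run_ops d Qf acc Us i j = foldl (\<lambda>v U. mat_vec d U (mat_vec d Qf v)) (\<lambda>k. acc k j) Us i"
proof (induction Us arbitrary: acc)
  case Nil
  then show ?case by simp
next
  case (Cons U Us)
  have "(\<lambda>k. mmult d U (mmult d Qf acc) k j) = mat_vec d U (mat_vec d Qf (\<lambda>k. acc k j))"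
    by (auto simp: mmult_def mat_vec_def sum_distrib_left sum_distrib_right mult.assoc
        intro!: ext sum.cong)
  then show ?case using Cons by simp
qed

lemma of_real_sq_norm: "complex_of_real (sq_norm d v) = (\<Sum>i<d. v i * cnj (v i))"
  unfolding sq_norm_def of_real_sum by (intro sum.cong refl) (metis complex_norm_square)

lemma sq_norm_mat_vec_unitary:
  assumes "unitary_on d U"
  shows "sq_norm d (mat_vec d U v) = sq_norm d v"
proof -
  have "complex_of_real (sq_norm d (mat_vec d U v))
      = (\<Sum>i<d. \<Sum>k<d. \<Sum>l<d. (v k * cnj (v l)) * (cnj (U i l) * U i k))"
    by (simp add: of_real_sq_norm mat_vec_def sum_distrib_left sum_distrib_right mult_ac)
      (rule sum.cong, simp, rule sum.swap)
  also have "\<dots> = (\<Sum>k<d. \<Sum>l<d. (v k * cnj (v l)) * (\<Sum>i<d. cnj (U i l) * U i k))"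
    by (subst sum.swap, rule sum.cong[OF refl], subst sum.swap) (simp add: sum_distrib_left)
  also have "\<dots> = (\<Sum>k<d. \<Sum>l<d. (v k * cnj (v l)) * (if l = k then 1 else 0))"
    using assms unfolding unitary_on_def by (intro sum.cong refl) auto
  also have "\<dots> = complex_of_real (sq_norm d v)"
    by (simp add: of_real_sq_norm if_distrib cong: if_cong)
  finally show ?thesis using of_real_eq_iff by blast
qed

lemma sq_norm_unitary_column:
  assumes "unitary_on d U" "b < d"
  shows "sq_norm d (\<lambda>k. U k b) = 1"
proof -
  have "complex_of_real (sq_norm d (\<lambda>k. U k b)) = (\<Sum>k<d. cnj (U k b) * U k b)"
    by (simp add: of_real_sq_norm mult.commute)
  also have "\<dots> = 1" using assms unfolding unitary_on_def by simp
  finally show ?thesis by (metis of_real_eq_1_iff)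
qed

lemma sq_norm_mat_vec_perm:
  assumes "bij_betw \<pi> {..<d} {..<d}"
  shows "sq_norm d (mat_vec d (\<lambda>r c. if r = \<pi> c then 1 else 0) v) = sq_norm d v"
proof -
  have inj: "inj_on \<pi> {..<d}" using assms bij_betw_def by blast
  have "mat_vec d (\<lambda>r c. if r = \<pi> c then 1 else 0) v (\<pi> k) = v k" if k: "k < d" for k
  proof -
    have "mat_vec d (\<lambda>r c. if r = \<pi> c then 1 else 0) v (\<pi> k) = (\<Sum>k'<d. if k' = k then v k' else 0)"
      unfolding mat_vec_def using inj k by (intro sum.cong refl) (auto dest: inj_onD)
    then show ?thesis using k by simp
  qed
  then show ?thesis
    unfolding sq_norm_def
    by (simp add: sum.reindex_bij_betw[OF assms, symmetric,
          of "\<lambda>c. (cmod (mat_vec d (\<lambda>r c. if r = \<pi> c then 1 else 0) v c))\<^sup>2"])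
qed

lemma mixed_radix_digits:
  fixes i x y A B :: nat
  assumes "x < B" "y < A"
  shows "(i * (B * A) + x * A + y) div (B * A) = i"
    and "((i * (B * A) + x * A + y) div A) mod B = x"
    and "(i * (B * A) + x * A + y) mod A = y"
proof -
  have shift: "i * (B * A) + x * A + y = (i * B + x) * A + y" by (simp add: algebra_simps)
  have "x * A + y < (x + 1) * A" using assms by simp
  also have "\<dots> \<le> B * A" using assms by (intro mult_right_mono) auto
  finally have "x * A + y < B * A" .
  then show "(i * (B * A) + x * A + y) div (B * A) = i"
    unfolding add.assoc by (metis div_eq_0_iff add.right_neutral div_mult_self3 not_less_zero)
  show "((i * (B * A) + x * A + y) div A) mod B = x" "(i * (B * A) + x * A + y) mod A = y"
    unfolding shift using assms by simp_all
qed

lemma mixed_radix_expansion: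
  fixes c A B :: nat
  shows "c = (c div (B * A)) * (B * A) + ((c div A) mod B) * A + c mod A"
proof -
  have "c div (B * A) = (c div A) div B" by (simp add: div_mult2_eq mult.commute)
  then have "(c div (B * A)) * (B * A) + ((c div A) mod B) * A = (c div A) * A"
    by (metis div_mult_mod_eq distrib_right mult.assoc mult.commute)
  then show ?thesis by simp
qed

text \<open>With \<open>A = 2^(m - m' - m'')\<close> and \<open>B = 2^m''\<close> the digits of a basis index \<open>c\<close> are
  \<open>i = c div (B * A)\<close>, \<open>x = (c div A) mod B\<close> and \<open>y = c mod A\<close>; the query only shifts \<open>x\<close>.\<close>

lemma query_image_digits:
  assumes "valid_query D Q"
  defines "A \<equiv> (2::nat) ^ (qm Q - qm1 Q - qm2 Q)" and "B \<equiv> (2::nat) ^ qm2 Q"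
  shows "2 ^ qm Q = 2 ^ qm1 Q * (B * A)"
    and "query_image Q f c div (B * A) = c div (B * A)"
    and "(query_image Q f c div A) mod B =
      (if c div (B * A) \<in> qZ Q then ((c div A) mod B + qbeta Q (f (qtau Q (c div (B * A))))) mod B
       else (c div A) mod B)"
    and "query_image Q f c mod A = c mod A"
proof -
  have m: "qm Q = qm1 Q + qm2 Q + (qm Q - qm1 Q - qm2 Q)"
    using assms(1) unfolding valid_query_def by auto
  have "(2::nat) ^ (qm Q - qm1 Q) = B * A"
    unfolding A_def B_def by (subst m) (simp add: power_add)
  then have "query_image Q f c = (if c div (B * A) \<in> qZ Q
       then c div (B * A) * (B * A) + (((c div A) mod B + t) mod B) * A + c mod A else c)"
    if "t = qbeta Q (f (qtau Q (c div (B * A))))" for t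
    unfolding query_image_def Let_def A_def B_def that by simp
  moreover have "A > 0" "B > 0" by (simp_all add: A_def B_def)
  ultimately show "query_image Q f c div (B * A) = c div (B * A)"
    "(query_image Q f c div A) mod B =
      (if c div (B * A) \<in> qZ Q then ((c div A) mod B + qbeta Q (f (qtau Q (c div (B * A))))) mod B
       else (c div A) mod B)"
    "query_image Q f c mod A = c mod A"
    using mixed_radix_digits[of "((c div A) mod B + qbeta Q (f (qtau Q (c div (B * A))))) mod B"
        B "c mod A" A]
    by auto
  show "2 ^ qm Q = 2 ^ qm1 Q * (B * A)"
    unfolding A_def B_def by (subst m) (simp add: power_add)
qed

lemma bij_betw_query_image:
  assumes Q: "valid_query D Q"
  shows "bij_betw (query_image Q f) {..<2 ^ qm Q} {..<2 ^ qm Q}"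
proof -
  define A :: nat where "A = 2 ^ (qm Q - qm1 Q - qm2 Q)"
  define B :: nat where "B = 2 ^ qm2 Q"
  have A: "A > 0" and B: "B > 0" by (auto simp: A_def B_def)
  note digits = query_image_digits[OF Q, folded A_def B_def]
  have into: "query_image Q f c < 2 ^ qm Q" if "c < 2 ^ qm Q" for c
  proof -
    have "c div (B * A) < 2 ^ qm1 Q"
      using that digits(1) A B by (auto simp: div_less_iff_less_mult mult.commute)
    then show ?thesis
      using digits(1,2) A B by (metis div_less_iff_less_mult mult.commute mult_pos_pos)
  qed
  have "inj_on (query_image Q f) {..<2 ^ qm Q}"
  proof (rule inj_onI)
    fix c1 c2 assume eq: "query_image Q f c1 = query_image Q f c2"
    then have hi: "c1 div (B * A) = c2 div (B * A)" and lo: "c1 mod A = c2 mod A"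
      using digits(2,4) by metis+
    have cancel: "(a + s) mod B = (b + s) mod B \<Longrightarrow> a mod B = b mod B" for a b s :: nat
      by (simp add: mod_eq_iff_dvd_symdiff_nat)
    have "(c1 div A) mod B = (c2 div A) mod B"
      using eq digits(3)[of f c1] digits(3)[of f c2] unfolding hi
      by (auto split: if_splits) (metis cancel mod_mod_trivial)
    then show "c1 = c2"
      using mixed_radix_expansion[of c1 B A] mixed_radix_expansion[of c2 B A] hi lo by simp
  qed
  moreover have "query_image Q f ` {..<2 ^ qm Q} = {..<2 ^ qm Q}"
    by (rule endo_inj_surj) (use into \<open>inj_on _ _\<close> in auto)
  ultimately show ?thesis unfolding bij_betw_def by simp
qed

lemma sq_norm_mat_vec_query_op:
  assumes "valid_query D Q"
  shows "sq_norm (2 ^ qm Q) (mat_vec (2 ^ qm Q) (query_op Q f) v) = sq_norm (2 ^ qm Q) v"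
  using sq_norm_mat_vec_perm[OF bij_betw_query_image[OF assms, of f]] unfolding query_op_def .

lemma sq_norm_foldl_mat_vec:
  assumes "\<And>w. sq_norm d (mat_vec d Qf w) = sq_norm d w" "\<forall>U\<in>set Us. unitary_on d U"
  shows "sq_norm d (foldl (\<lambda>v U. mat_vec d U (mat_vec d Qf v)) v0 Us) = sq_norm d v0"
  using assms(2) by (induction Us arbitrary: v0) (simp_all add: sq_norm_mat_vec_unitary assms(1))

lemma sum_sq_nm_run:
  assumes "valid_nm_alg D B" "b < 2 ^ qm (nm_query B)"
  shows "(\<Sum>x<2 ^ qm (nm_query B). (cmod (nm_run B f x b))\<^sup>2) = 1"
proof -
  define d :: nat where "d = 2 ^ qm (nm_query B)"
  have U: "\<forall>U\<in>set (nm_U B). unitary_on d U" and ne: "nm_U B \<noteq> []"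
    and Q: "valid_query D (nm_query B)"
    using assms(1) unfolding valid_nm_alg_def d_def by auto
  have "(\<Sum>x<d. (cmod (nm_run B f x b))\<^sup>2)
      = sq_norm d (foldl (\<lambda>v U. mat_vec d U (mat_vec d (query_op (nm_query B) f) v))
                         (\<lambda>k. hd (nm_U B) k b) (tl (nm_U B)))"
    unfolding sq_norm_def nm_run_def d_def run_ops_column ..
  also have "\<dots> = sq_norm d (\<lambda>k. hd (nm_U B) k b)"
    by (rule sq_norm_foldl_mat_vec)
      (use sq_norm_mat_vec_query_op[OF Q] U ne in \<open>auto simp: d_def dest: list.set_sel(2)\<close>)
  also have "\<dots> = 1"
    by (rule sq_norm_unitary_column) (use U ne assms(2) in \<open>auto simp: d_def\<close>)
  finally show ?thesis by (simp add: d_def)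
qed


section \<open>Outcome probabilities and errors\<close>

definition Pi_list :: "(nat \<Rightarrow> 'a set) \<Rightarrow> nat \<Rightarrow> 'a list set" where
  "Pi_list S L = {xs. length xs = L \<and> (\<forall>i<L. xs ! i \<in> S i)}"

lemma Pi_list_0 [simp]: "Pi_list S 0 = {[]}"
  by (auto simp: Pi_list_def)

lemma Pi_list_Suc: "Pi_list S (Suc L) = (\<lambda>(ys, x). ys @ [x]) ` (Pi_list S L \<times> S L)"
proof (intro equalityI subsetI)
  fix xs assume "xs \<in> Pi_list S (Suc L)"
  then have l: "length xs = Suc L" and s: "\<forall>i<Suc L. xs ! i \<in> S i" by (auto simp: Pi_list_def)
  then obtain ys x where xs: "xs = ys @ [x]" by (metis length_Suc_conv_rev)
  have "ys \<in> Pi_list S L" using l s unfolding xs Pi_list_def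
    by (auto simp: nth_append) (metis less_SucI nth_append)
  moreover have "x \<in> S L" using l s[rule_format, of L] unfolding xs by (simp add: nth_append)
  ultimately show "xs \<in> (\<lambda>(ys, x). ys @ [x]) ` (Pi_list S L \<times> S L)" using xs by auto
next
  fix xs assume "xs \<in> (\<lambda>(ys, x). ys @ [x]) ` (Pi_list S L \<times> S L)"
  then show "xs \<in> Pi_list S (Suc L)" by (auto simp: Pi_list_def nth_append less_Suc_eq)
qed

lemma finite_Pi_list: "(\<And>i. i < L \<Longrightarrow> finite (S i)) \<Longrightarrow> finite (Pi_list S L)"
  by (induction L) (auto simp: Pi_list_Suc)

lemma sum_Pi_list_Suc:
  assumes "finite (S L)"
  shows "(\<Sum>xs\<in>Pi_list S (Suc L). F xs) = (\<Sum>ys\<in>Pi_list S L. \<Sum>x\<in>S L. F (ys @ [x]))"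
proof -
  have "inj_on (\<lambda>(ys, x). ys @ [x]) (Pi_list S L \<times> S L)"
    by (auto intro!: inj_onI)
  then have "(\<Sum>xs\<in>Pi_list S (Suc L). F xs) = (\<Sum>(ys, x)\<in>Pi_list S L \<times> S L. F (ys @ [x]))"
    unfolding Pi_list_Suc by (simp add: sum.reindex case_prod_unfold)
  also have "\<dots> = (\<Sum>ys\<in>Pi_list S L. \<Sum>x\<in>S L. F (ys @ [x]))"
    by (rule sum.cartesian_product[symmetric])
  finally show ?thesis .
qed

lemma prod_lessThan_append:
  assumes "length ys = L"
  shows "(\<Prod>l<Suc L. g l ((ys @ [x]) ! l) (take l (ys @ [x])))
       = (\<Prod>l<L. g l (ys ! l) (take l ys)) * g L x ys"
proof -
  have "(\<Prod>l<L. g l ((ys @ [x]) ! l) (take l (ys @ [x]))) = (\<Prod>l<L. g l (ys ! l) (take l ys))"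
    using assms by (intro prod.cong refl) (auto simp: nth_append)
  then show ?thesis using assms by (simp add: nth_append)
qed

lemma sum_Pi_list_prod_conditional:
  assumes "\<And>i. finite (S i)"
    and "\<And>l ys. l < L \<Longrightarrow> ys \<in> Pi_list S l \<Longrightarrow> (\<Sum>x\<in>S l. g l x ys) = (1::'b::comm_semiring_1)"
  shows "(\<Sum>xs\<in>Pi_list S L. \<Prod>l<L. g l (xs ! l) (take l xs)) = 1"
  using assms(2)
proof (induction L)
  case 0
  then show ?case by simp
next
  case (Suc L)
  have "(\<Sum>xs\<in>Pi_list S (Suc L). \<Prod>l<Suc L. g l (xs ! l) (take l xs))
      = (\<Sum>ys\<in>Pi_list S L. \<Sum>x\<in>S L. \<Prod>l<Suc L. g l ((ys @ [x]) ! l) (take l (ys @ [x])))"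
    by (rule sum_Pi_list_Suc[OF assms(1)])
  also have "\<dots> = (\<Sum>ys\<in>Pi_list S L. \<Sum>x\<in>S L. (\<Prod>l<L. g l (ys ! l) (take l ys)) * g L x ys)"
    by (intro sum.cong refl prod_lessThan_append) (simp add: Pi_list_def)
  also have "\<dots> = (\<Sum>ys\<in>Pi_list S L. \<Prod>l<L. g l (ys ! l) (take l ys))"
    by (intro sum.cong refl) (simp add: sum_distrib_left[symmetric] Suc.prems)
  also have "\<dots> = 1" using Suc by simp
  finally show ?case .
qed

lemma sum_Pi_list_prod:
  assumes "\<And>i. finite (S i)"
  shows "(\<Sum>xs\<in>Pi_list S L. \<Prod>l<L. g l (xs ! l)) = (\<Prod>l<L. \<Sum>x\<in>S l. (g l x :: 'b::comm_semiring_1))"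
proof (induction L)
  case 0
  then show ?case by simp
next
  case (Suc L)
  have "(\<Sum>xs\<in>Pi_list S (Suc L). \<Prod>l<Suc L. g l (xs ! l))
      = (\<Sum>ys\<in>Pi_list S L. \<Sum>x\<in>S L. \<Prod>l<Suc L. g l ((ys @ [x]) ! l))"
    by (rule sum_Pi_list_Suc[OF assms])
  also have "\<dots> = (\<Sum>ys\<in>Pi_list S L. \<Sum>x\<in>S L. (\<Prod>l<L. g l (ys ! l)) * g L x)"
    using prod_lessThan_append[where g = "\<lambda>l x _. g l x"]
    by (intro sum.cong refl) (simp add: Pi_list_def)
  also have "\<dots> = (\<Sum>ys\<in>Pi_list S L. \<Prod>l<L. g l (ys ! l)) * (\<Sum>x\<in>S L. g L x)"
    by (simp add: sum_product)
  finally show ?case using Suc by simp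
qed

lemma outcomes_eq_Pi_list: "outcomes A = Pi_list (\<lambda>i. {..<2 ^ q_qubits A i}) (q_k A)"
  by (simp add: outcomes_def prefix_outcomes_def Pi_list_def)

lemma finite_outcomes: "finite (outcomes A)"
  unfolding outcomes_eq_Pi_list by (rule finite_Pi_list) simp

lemma outcome_prob_nonneg: "0 \<le> outcome_prob A f xs"
  unfolding outcome_prob_def by (simp add: prod_nonneg)

lemma sum_outcome_prob:
  assumes "valid_qalg D A"
  shows "(\<Sum>xs\<in>outcomes A. outcome_prob A f xs) = 1"
  unfolding outcomes_eq_Pi_list outcome_prob_def
proof (rule sum_Pi_list_prod_conditional
    [where g = "\<lambda>l x ys. (cmod (nm_run (q_algs A ! l) f x (q_b A l ys)))\<^sup>2"])
  fix l and ys :: "nat list" assume l: "l < q_k A" and ys: "ys \<in> Pi_list (\<lambda>i. {..<2 ^ q_qubits A i}) l"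
  have "valid_nm_alg D (q_algs A ! l)" using assms l unfolding valid_qalg_def q_k_def by auto
  moreover have "q_b A l ys < 2 ^ qm (nm_query (q_algs A ! l))"
    using assms l ys unfolding valid_qalg_def prefix_outcomes_def Pi_list_def q_qubits_def by auto
  ultimately show "(\<Sum>x\<in>{..<2 ^ q_qubits A l}. (cmod (nm_run (q_algs A ! l) f x (q_b A l ys)))\<^sup>2) = 1"
    unfolding q_qubits_def by (rule sum_sq_nm_run)
qed simp

lemma sum_le_sum_not_in_set:
  fixes w :: "'a list \<Rightarrow> real"
  assumes "finite Y" "S \<subseteq> Y" "finite C" "\<And>xs. 0 \<le> w xs"
    and "\<And>xs. xs \<in> S \<Longrightarrow> w xs \<noteq> 0 \<Longrightarrow> \<exists>c\<in>C. c \<notin> set xs"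
  shows "(\<Sum>xs\<in>S. w xs) \<le> (\<Sum>c\<in>C. \<Sum>xs\<in>{xs \<in> Y. c \<notin> set xs}. w xs)"
proof -
  have fin: "finite S" using assms(1,2) by (rule finite_subset[rotated])
  have "(\<Sum>xs\<in>S. w xs) \<le> (\<Sum>xs\<in>S. \<Sum>c\<in>C. if c \<notin> set xs then w xs else 0)"
  proof (rule sum_mono)
    fix xs assume xs: "xs \<in> S"
    show "w xs \<le> (\<Sum>c\<in>C. if c \<notin> set xs then w xs else 0)"
    proof (cases "w xs = 0")
      case True
      then show ?thesis using assms(4) by (simp add: sum_nonneg)
    next
      case False
      then obtain c where "c \<in> C" "c \<notin> set xs" using assms(5)[OF xs] by blast
      then show ?thesis
        using assms(3,4) member_le_sum[of c C "\<lambda>c. if c \<notin> set xs then w xs else 0"] by auto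
    qed
  qed
  also have "\<dots> = (\<Sum>c\<in>C. \<Sum>xs\<in>{xs \<in> S. c \<notin> set xs}. w xs)"
    using fin by (subst sum.swap) (simp add: sum.inter_filter)
  also have "\<dots> \<le> (\<Sum>c\<in>C. \<Sum>xs\<in>{xs \<in> Y. c \<notin> set xs}. w xs)"
    using assms by (intro sum_mono sum_mono2) auto
  finally show ?thesis .
qed

lemma outcome_prob_eq_0_if:
  assumes "l < q_k A" "(cmod (nm_run (q_algs A ! l) f (xs ! l) (q_b A l (take l xs))))\<^sup>2 = 0"
  shows "outcome_prob A f xs = 0"
  unfolding outcome_prob_def using assms by (intro prod_zero) auto

text \<open>When the measured column does not depend on earlier outcomes (\<open>q_b A = (\<lambda>_ _. 0)\<close>), the
  stages are independent and the probability of never observing \<open>c\<close> factorizes.\<close>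

lemma sum_outcome_prob_not_in_set:
  assumes A: "valid_qalg D A" "q_b A = (\<lambda>_ _. 0)"
    and m: "\<And>l. l < q_k A \<Longrightarrow> q_qubits A l = m" and c: "c < 2 ^ m"
  shows "(\<Sum>xs\<in>{xs \<in> outcomes A. c \<notin> set xs}. outcome_prob A f xs)
       = (\<Prod>l<q_k A. 1 - (cmod (nm_run (q_algs A ! l) f c 0))\<^sup>2)"
proof -
  define P where "P l x = (cmod (nm_run (q_algs A ! l) f x 0))\<^sup>2" for l x
  have "{xs \<in> outcomes A. c \<notin> set xs} = Pi_list (\<lambda>_. {..<2 ^ m} - {c}) (q_k A)"
    unfolding outcomes_eq_Pi_list Pi_list_def using m by (auto simp: in_set_conv_nth)
  then have "(\<Sum>xs\<in>{xs \<in> outcomes A. c \<notin> set xs}. outcome_prob A f xs)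
      = (\<Prod>l<q_k A. \<Sum>x\<in>{..<2 ^ m} - {c}. P l x)"
    using sum_Pi_list_prod[of "\<lambda>_. {..<2 ^ m} - {c}" P "q_k A"]
    by (simp add: outcome_prob_def A(2) P_def)
  also have "\<dots> = (\<Prod>l<q_k A. 1 - P l c)"
  proof (intro prod.cong refl)
    fix l assume l: "l \<in> {..<q_k A}"
    then have "valid_nm_alg D (q_algs A ! l)" using A(1) by (auto simp: valid_qalg_def q_k_def)
    then have "(\<Sum>x<2 ^ m. P l x) = 1"
      using sum_sq_nm_run[of D "q_algs A ! l" 0 f] m[of l] l by (simp add: P_def q_qubits_def)
    then show "(\<Sum>x\<in>{..<2 ^ m} - {c}. P l x) = 1 - P l c"
      using c by (simp add: sum_diff1)
  qed
  finally show ?thesis unfolding P_def .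
qed

lemma q_err_nonneg:
  assumes "valid_qalg D A"
  shows "0 \<le> q_err S A f"
  unfolding q_err_def
proof (rule Inf_greatest, clarify)
  fix eps :: real
  assume small: "(\<Sum>xs\<in>{xs \<in> outcomes A. eps < norm (S f - q_phi A xs)}. outcome_prob A f xs) \<le> 1/4"
  show "0 \<le> ereal eps"
  proof (rule ccontr)
    assume "\<not> 0 \<le> ereal eps"
    then have "eps < 0" by simp
    then have "{xs \<in> outcomes A. eps < norm (S f - q_phi A xs)} = outcomes A"
      by (auto intro: less_le_trans)
    then show False using small sum_outcome_prob[OF assms, of f] by simp
  qed
qed

lemma q_err_leI:
  assumes "(\<Sum>xs\<in>{xs \<in> outcomes A. eps < norm (S f - q_phi A xs)}. outcome_prob A f xs) \<le> 1/4"
  shows "q_err S A f \<le> ereal eps"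
  unfolding q_err_def by (rule Inf_lower) (use assms in auto)

lemma min_query_err_le:
  assumes "valid_qalg D A" "n_q A \<le> n" "\<And>f. f \<in> F \<Longrightarrow> q_err S A f \<le> e"
  shows "min_query_err D n S F \<le> e"
proof -
  have "min_query_err D n S F \<le> q_err_F S A F"
    unfolding min_query_err_def by (rule INF_lower) (simp add: assms(1,2))
  also have "\<dots> \<le> e"
    unfolding q_err_F_def by (rule SUP_least) (rule assms(3))
  finally show ?thesis .
qed

lemma min_query_err_eq_0I:
  fixes S :: "('d \<Rightarrow> 'k) \<Rightarrow> 'g::real_normed_vector"
  assumes "F \<noteq> {}"
    and "\<And>e. 0 < e \<Longrightarrow> \<exists>A :: ('d, 'k, 'g) qalg.
           valid_qalg D A \<and> n_q A \<le> n \<and> (\<forall>f\<in>F. q_err S A f \<le> ereal e)"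
  shows "min_query_err D n S F = 0"
proof (rule antisym)
  show "min_query_err D n S F \<le> 0"
  proof (rule ereal_le_epsilon2)
    fix e :: real assume "0 < e"
    then obtain A :: "('d, 'k, 'g) qalg" where
      "valid_qalg D A" "n_q A \<le> n" "\<forall>f\<in>F. q_err S A f \<le> ereal e"
      using assms(2) by blast
    then show "min_query_err D n S F \<le> 0 + ereal e"
      by (simp add: min_query_err_le)
  qed
  obtain f where "f \<in> F" using assms(1) by blast
  show "0 \<le> min_query_err D n S F"
    unfolding min_query_err_def q_err_F_def
    by (rule INF_greatest, rule order.trans[OF q_err_nonneg SUP_upper[OF \<open>f \<in> F\<close>]]) auto
qed


section \<open>Real unitary matrices\<close>

definition cmat :: "(nat \<Rightarrow> nat \<Rightarrow> real) \<Rightarrow> cmatrix" where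
  "cmat R = (\<lambda>i j. complex_of_real (R i j))"

definition rmat_vec :: "nat \<Rightarrow> (nat \<Rightarrow> nat \<Rightarrow> real) \<Rightarrow> (nat \<Rightarrow> real) \<Rightarrow> nat \<Rightarrow> real" where
  "rmat_vec d A v = (\<lambda>i. \<Sum>k<d. A i k * v k)"

lemma unitary_on_cmat_iff:
  "unitary_on d (cmat R) \<longleftrightarrow> (\<forall>i<d. \<forall>j<d. (\<Sum>k<d. R k i * R k j) = (if i = j then 1 else 0))"
proof -
  have "(\<Sum>k<d. cnj (cmat R k i) * cmat R k j) = (if i = j then 1 else 0)
      \<longleftrightarrow> complex_of_real (\<Sum>k<d. R k i * R k j) = complex_of_real (if i = j then 1 else 0)" for i j
    by (simp add: cmat_def)
  then show ?thesis
    unfolding unitary_on_def of_real_eq_iff by blast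
qed

lemma mat_vec_cmat:
  "mat_vec d (cmat R) (\<lambda>k. complex_of_real (v k)) = (\<lambda>i. complex_of_real (rmat_vec d R v i))"
  by (simp add: mat_vec_def cmat_def rmat_vec_def)

lemma foldl_mat_vec_cmat:
  "foldl (\<lambda>v U. mat_vec d U (mat_vec d (cmat Q) v)) (\<lambda>k. complex_of_real (v0 k)) (map cmat Rs)
   = (\<lambda>i. complex_of_real (foldl (\<lambda>v U. rmat_vec d U (rmat_vec d Q v)) v0 Rs i))"
  by (induction Rs arbitrary: v0) (simp_all add: mat_vec_cmat)

lemma rmat_vec_cong: "(\<And>k. k < d \<Longrightarrow> v k = w k) \<Longrightarrow> rmat_vec d A v = rmat_vec d A w"
  by (simp add: rmat_vec_def)

lemma foldl_rmat_vec_cong: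
  assumes "\<And>k. k < d \<Longrightarrow> v k = w k" "c < d"
  shows "foldl (\<lambda>v U. rmat_vec d U (rmat_vec d Q v)) v Us c
       = foldl (\<lambda>v U. rmat_vec d U (rmat_vec d Q v)) w Us c"
proof (cases Us)
  case Nil
  then show ?thesis using assms by simp
next
  case (Cons U Us')
  have "rmat_vec d Q v = rmat_vec d Q w" using assms(1) by (rule rmat_vec_cong)
  then show ?thesis using Cons by simp
qed

definition id_mat :: "nat \<Rightarrow> nat \<Rightarrow> real" where
  "id_mat = (\<lambda>i j. if i = j then 1 else 0)"

lemma unitary_id_mat: "unitary_on d (cmat id_mat)"
  unfolding unitary_on_cmat_iff id_mat_def by (simp add: of_bool_def[symmetric])

lemma rmat_vec_id_mat: "c < d \<Longrightarrow> rmat_vec d id_mat v c = v c"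
  unfolding rmat_vec_def id_mat_def by (simp add: of_bool_def[symmetric])

definition householder :: "nat \<Rightarrow> (nat \<Rightarrow> real) \<Rightarrow> nat \<Rightarrow> nat \<Rightarrow> real" where
  "householder d w = (\<lambda>i j. (if i = j then 1 else 0) - 2 * w i * w j / (\<Sum>k<d. (w k)\<^sup>2))"

lemma rmat_vec_householder:
  assumes "c < d"
  shows "rmat_vec d (householder d w) v c = v c - 2 * w c * (\<Sum>k<d. w k * v k) / (\<Sum>k<d. (w k)\<^sup>2)"
proof -
  have "rmat_vec d (householder d w) v c
      = (\<Sum>k<d. (if c = k then 1 else 0) * v k) - (\<Sum>k<d. 2 * w c * w k / (\<Sum>k<d. (w k)\<^sup>2) * v k)"
    unfolding rmat_vec_def householder_def by (simp only: left_diff_distrib sum_subtractf)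
  also have "\<dots> = v c - 2 * w c * (\<Sum>k<d. w k * v k) / (\<Sum>k<d. (w k)\<^sup>2)"
    using assms by (simp add: of_bool_def[symmetric] sum_distrib_left sum_divide_distrib mult_ac)
  finally show ?thesis .
qed

lemma unitary_householder:
  assumes "(\<Sum>k<d. (w k)\<^sup>2) \<noteq> 0"
  shows "unitary_on d (cmat (householder d w))"
  unfolding unitary_on_cmat_iff
proof (intro allI impI)
  fix i j assume i: "i < d" and j: "j < d"
  define S where "S = (\<Sum>k<d. (w k)\<^sup>2)"
  have col: "(\<Sum>k<d. w k * householder d w k j) = - w j"
    using assms j
    by (simp add: householder_def S_def[symmetric] right_diff_distrib sum_subtractf
        sum_divide_distrib[symmetric] sum_distrib_left[symmetric] power2_eq_square mult_ac)
      (simp add: of_bool_def[symmetric] sum_distrib_right[symmetric] mult.assoc[symmetric])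
  have "(\<Sum>k<d. householder d w k i * householder d w k j)
      = rmat_vec d (householder d w) (\<lambda>k. householder d w k j) i"
    unfolding rmat_vec_def householder_def by (intro sum.cong refl) (auto simp: mult_ac)
  also have "\<dots> = householder d w i j + 2 * w i * w j / S"
    using i by (simp add: rmat_vec_householder col S_def)
  finally show "(\<Sum>k<d. householder d w k i * householder d w k j) = (if i = j then 1 else 0)"
    by (simp add: householder_def S_def)
qed

lemma rmat_vec_householder_diff:
  assumes eq: "(\<Sum>k<d. (u k)\<^sup>2) = (\<Sum>k<d. (v k)\<^sup>2)"
    and ne: "(\<Sum>k<d. (u k - v k)\<^sup>2) \<noteq> 0" and c: "c < d"
  shows "rmat_vec d (householder d (\<lambda>k. u k - v k)) u c = v c"
proof -
  define a where "a = (\<Sum>k<d. u k * v k)"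
  define U where "U = (\<Sum>k<d. (u k)\<^sup>2)"
  have num: "(\<Sum>k<d. (u k - v k) * u k) = U - a"
    by (simp add: U_def a_def left_diff_distrib right_diff_distrib sum_subtractf power2_eq_square
        mult.commute)
  have den: "(\<Sum>k<d. (u k - v k)\<^sup>2) = 2 * (U - a)"
    using eq by (simp add: U_def a_def power2_diff sum_subtractf sum.distrib sum_distrib_left mult_ac)
  have "U \<noteq> a" using ne den by simp
  have "rmat_vec d (householder d (\<lambda>k. u k - v k)) u c
      = u c - 2 * (u c - v c) * (U - a) / (2 * (U - a))"
    using c by (simp add: rmat_vec_householder num den)
  also have "\<dots> = v c" using \<open>U \<noteq> a\<close> by (simp add: field_simps)
  finally show ?thesis .
qed

definition block_diag :: "nat \<Rightarrow> (nat \<Rightarrow> nat \<Rightarrow> real) \<Rightarrow> nat \<Rightarrow> nat \<Rightarrow> real" where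
  "block_diag B R = (\<lambda>c c'. if c div B = c' div B then R (c mod B) (c' mod B) else 0)"

lemma sum_lessThan_mult_blocks: "(\<Sum>k<n * B. h k) = (\<Sum>i<n. \<Sum>y<(B::nat). h (i * B + y))"
  by (subst sum_mult_product) (simp add: add.commute)

lemma rmat_vec_block_diag:
  assumes "c < n * B"
  shows "rmat_vec (n * B) (block_diag B R) v c = (\<Sum>y<B. R (c mod B) y * v ((c div B) * B + y))"
proof -
  have B: "B > 0" using assms by (cases B) auto
  have "rmat_vec (n * B) (block_diag B R) v c
      = (\<Sum>i<n. if i = c div B then (\<Sum>y<B. R (c mod B) y * v (i * B + y)) else 0)"
    unfolding rmat_vec_def sum_lessThan_mult_blocks block_diag_def using B
    by (intro sum.cong refl) auto
  also have "\<dots> = (\<Sum>y<B. R (c mod B) y * v ((c div B) * B + y))"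
    using assms B by (simp add: div_less_iff_less_mult)
  finally show ?thesis .
qed

lemma unitary_block_diag:
  assumes U: "unitary_on B (cmat R)" and B: "B > 0"
  shows "unitary_on (n * B) (cmat (block_diag B R))"
  unfolding unitary_on_cmat_iff
proof (intro allI impI)
  fix a b assume a: "a < n * B" and b: "b < n * B"
  have blk: "block_diag B R (i * B + y) c = (if i = c div B then R y (c mod B) else 0)"
    if "y < B" for i y c
    using that by (simp add: block_diag_def)
  have "(\<Sum>k<n * B. block_diag B R k a * block_diag B R k b)
      = (\<Sum>i<n. \<Sum>y<B. (if i = a div B then R y (a mod B) else 0)
                          * (if i = b div B then R y (b mod B) else 0))"
    unfolding sum_lessThan_mult_blocks by (intro sum.cong refl) (simp add: blk)
  also have "\<dots> = (\<Sum>i<n. if i = a div B \<and> i = b div B then (\<Sum>y<B. R y (a mod B) * R y (b mod B)) else 0)"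
  proof -
    have "(\<Sum>y<B. (if i = a div B then R y (a mod B) else 0)
                    * (if i = b div B then R y (b mod B) else 0))
        = (if i = a div B \<and> i = b div B then (\<Sum>y<B. R y (a mod B) * R y (b mod B)) else 0)" for i
      by (cases "i = a div B"; cases "i = b div B") simp_all
    then show ?thesis by simp
  qed
  also have "\<dots> = (if a div B = b div B then (\<Sum>y<B. R y (a mod B) * R y (b mod B)) else 0)"
  proof (cases "a div B = b div B")
    case True
    then show ?thesis using a b B by (simp add: div_less_iff_less_mult)
  next
    case False
    then show ?thesis by (simp, intro sum.neutral) auto
  qed
  also have "\<dots> = (if a = b then 1 else 0)"
  proof -
    have "a = b \<longleftrightarrow> a div B = b div B \<and> a mod B = b mod B"
      by (metis div_mult_mod_eq)
    then show ?thesis using U B unfolding unitary_on_cmat_iff by auto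
  qed
  finally show "(\<Sum>k<n * B. block_diag B R k a * block_diag B R k b) = (if a = b then 1 else 0)" .
qed

section \<open>Grover search with a phase oracle\<close>

lemma add_mod_eq_iff:
  fixes x y t B :: nat
  assumes "x < B" "y < B" "t < B"
  shows "(x + t) mod B = y \<longleftrightarrow> x = (y + B - t) mod B"
proof
  assume h: "(x + t) mod B = y"
  have "(y + B - t) mod B = ((x + t) mod B + (B - t)) mod B" using h assms by simp
  also have "\<dots> = (x + t + (B - t)) mod B" by (simp add: mod_add_left_eq)
  also have "x + t + (B - t) = x + B" using assms by simp
  finally show "x = (y + B - t) mod B" using assms by simp
next
  assume h: "x = (y + B - t) mod B"
  have "(x + t) mod B = ((y + (B - t)) mod B + t) mod B" using h assms by simp
  also have "\<dots> = (y + (B - t) + t) mod B" by (simp add: mod_add_left_eq)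
  also have "y + (B - t) + t = y + B" using assms by simp
  finally show "(x + t) mod B = y" using assms by simp
qed

lemma even_add_diff_mod_iff:
  fixes x t B :: nat
  assumes "even B" "t < B"
  shows "even ((x + B - t) mod B) \<longleftrightarrow> even (x + t)"
  by (metis (full_types) add_diff_inverse_nat assms(1,2) dvd_mod_iff
      even_add less_imp_add_positive not_add_less2 trans_less_add1)

text \<open>Basis index \<open>c = i * nval + x\<close> stands for \<open>|i\<rangle>|x\<rangle>\<close>, with an index register of \<open>m1\<close>
  qubits and a value register of \<open>r\<close> qubits; the oracle adds \<open>val i\<close> to \<open>x\<close> modulo \<open>nval\<close>.
  Values \<open>val i\<close> are odd exactly for the marked indices.\<close>

locale grover =
  fixes m1 r :: nat and val :: "nat \<Rightarrow> nat"
  assumes m1_ge_1: "1 \<le> m1" and r_ge_1: "1 \<le> r" and val_less: "\<And>i. val i < 2 ^ r"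
begin

definition "nidx = (2::nat) ^ m1"
definition "nval = (2::nat) ^ r"
definition "nstates = nidx * nval"

definition "oracle_image c = (c div nval) * nval + ((c mod nval + val (c div nval)) mod nval)"
definition "oracle_preimage c = (c div nval) * nval + ((c mod nval + nval - val (c div nval)) mod nval)"
definition "oracle = (\<lambda>c' c. if c' = oracle_image c then 1 else 0 :: real)"
definition "oracle_sign i = (-1::real) ^ (val i)"

definition "phase_state x = (-1::real) ^ x / sqrt nval"
definition "tensor_phase a c = a (c div nval) * phase_state (c mod nval)"
definition "amp0 = 1 / sqrt nidx"
definition "uniform_state = tensor_phase (\<lambda>_. amp0)"
definition "basis0 (c::nat) = (if c = 0 then 1 else 0 :: real)"

definition "prepare = householder nstates (\<lambda>c. basis0 c - uniform_state c)"
definition "diffusion = householder nstates uniform_state"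
definition "unphase_block = householder nval (\<lambda>x. phase_state x - basis0 x)"
definition "unphase = block_diag nval unphase_block"

text \<open>\<open>prepare\<close> maps \<open>|0\<rangle>\<close> to the uniform superposition over the index register tensored with
  \<open>phase_state\<close>; after \<open>t\<close> Grover iterations \<open>unphase\<close> resets the value register to \<open>|0\<rangle>\<close>, so
  that the final query writes \<open>val i\<close> into it.\<close>

definition "circuit t = [prepare] @ replicate t diffusion @ [unphase, id_mat]"

definition "grover_step a =
  (\<lambda>i. oracle_sign i * a i - 2 * (\<Sum>k<nidx. amp0 * (oracle_sign k * a k)) * amp0)"

abbreviation "layer \<equiv> (\<lambda>v U. rmat_vec nstates U (rmat_vec nstates oracle v))"

lemma nidx_ge_2: "nidx \<ge> 2"
  using power_increasing[OF m1_ge_1, of "2::nat"] by (simp add: nidx_def)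

lemma nval_ge_2: "nval \<ge> 2"
  using power_increasing[OF r_ge_1, of "2::nat"] by (simp add: nval_def)

lemma nval_pos: "nval > 0"
  using nval_ge_2 by simp

lemma even_nval: "even nval"
  using r_ge_1 by (simp add: nval_def)

lemma nstates_eq: "nstates = 2 ^ (m1 + r)"
  by (simp add: nstates_def nidx_def nval_def power_add)

lemma val_less_nval: "val i < nval"
  using val_less by (simp add: nval_def)

lemma div_nval_less: "c < nstates \<Longrightarrow> c div nval < nidx"
  using nval_pos by (simp add: nstates_def div_less_iff_less_mult)

lemma block_less:
  assumes "i < nidx" "y < nval"
  shows "i * nval + y < nstates"
proof -
  have "i * nval + y < (i + 1) * nval" using assms by simp
  also have "\<dots> \<le> nidx * nval" using assms by (intro mult_right_mono) auto
  finally show ?thesis by (simp add: nstates_def)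
qed

lemma oracle_preimage_less: "c < nstates \<Longrightarrow> oracle_preimage c < nstates"
  unfolding oracle_preimage_def using div_nval_less nval_pos by (intro block_less) auto

lemma oracle_image_eq_iff:
  assumes k: "k < nstates" and c: "c < nstates"
  shows "oracle_image k = c \<longleftrightarrow> k = oracle_preimage c"
proof -
  define t where "t = val (k div nval)"
  have t: "t < nval" by (simp add: t_def val_less_nval)
  have xk: "k mod nval < nval" and xc: "c mod nval < nval" using nval_pos by auto
  have img_div: "oracle_image k div nval = k div nval"
    and img_mod: "oracle_image k mod nval = (k mod nval + t) mod nval"
    unfolding oracle_image_def t_def using nval_pos by simp_all
  have pre_div: "oracle_preimage c div nval = c div nval"
    and pre_mod: "oracle_preimage c mod nval = (c mod nval + nval - val (c div nval)) mod nval"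
    unfolding oracle_preimage_def using nval_pos by simp_all
  show ?thesis
  proof
    assume h: "oracle_image k = c"
    then have d: "k div nval = c div nval" using img_div by simp
    have "(k mod nval + t) mod nval = c mod nval" using h img_mod by simp
    then have "k mod nval = (c mod nval + nval - t) mod nval" using add_mod_eq_iff[OF xk xc t] by simp
    then show "k = oracle_preimage c" using d pre_div pre_mod t_def by (metis div_mult_mod_eq)
  next
    assume h: "k = oracle_preimage c"
    then have d: "k div nval = c div nval" using pre_div by simp
    have "k mod nval = (c mod nval + nval - t) mod nval" using h pre_mod d t_def by simp
    then have "(k mod nval + t) mod nval = c mod nval" using add_mod_eq_iff[OF xk xc t] by simp
    then show "oracle_image k = c" using d img_div img_mod by (metis div_mult_mod_eq)
  qed
qed

lemma rmat_vec_oracle: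
  assumes c: "c < nstates"
  shows "rmat_vec nstates oracle v c = v (oracle_preimage c)"
proof -
  have "c = oracle_image k \<longleftrightarrow> k = oracle_preimage c" if "k < nstates" for k
    using oracle_image_eq_iff[OF that c] by auto
  then have "rmat_vec nstates oracle v c = (\<Sum>k<nstates. if k = oracle_preimage c then v k else 0)"
    unfolding rmat_vec_def oracle_def by (intro sum.cong refl) auto
  then show ?thesis using oracle_preimage_less[OF c] by simp
qed

text \<open>Phase kickback: \<open>phase_state\<close> is an eigenvector of every cyclic shift \<open>x \<mapsto> x + t mod nval\<close>,
  with eigenvalue \<open>(-1)^t\<close> because \<open>nval\<close> is even.\<close>

lemma rmat_vec_oracle_tensor_phase:
  assumes c: "c < nstates"
  shows "rmat_vec nstates oracle (tensor_phase a) c = tensor_phase (\<lambda>i. oracle_sign i * a i) c"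
proof -
  define t where "t = val (c div nval)"
  have t: "t < nval" by (simp add: t_def val_less_nval)
  have pre_div: "oracle_preimage c div nval = c div nval"
    and pre_mod: "oracle_preimage c mod nval = (c mod nval + nval - t) mod nval"
    unfolding oracle_preimage_def t_def using nval_pos by simp_all
  have "(-1::real) ^ ((c mod nval + nval - t) mod nval) = (-1) ^ (c mod nval + t)"
    using even_add_diff_mod_iff[OF even_nval t, of "c mod nval"] by (simp add: minus_one_power_iff)
  then have "phase_state (oracle_preimage c mod nval)
      = oracle_sign (c div nval) * phase_state (c mod nval)"
    unfolding phase_state_def oracle_sign_def pre_mod t_def by (simp add: power_add)
  then show ?thesis using rmat_vec_oracle[OF c] by (simp add: tensor_phase_def pre_div)
qed

lemma rmat_vec_oracle_basis0:
  assumes c: "c < nstates"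
  shows "rmat_vec nstates oracle (\<lambda>c. a (c div nval) * basis0 (c mod nval)) c
       = a (c div nval) * (if c mod nval = val (c div nval) then 1 else 0)"
proof -
  define t where "t = val (c div nval)"
  have t: "t < nval" by (simp add: t_def val_less_nval)
  have pre_div: "oracle_preimage c div nval = c div nval"
    and pre_mod: "oracle_preimage c mod nval = (c mod nval + nval - t) mod nval"
    unfolding oracle_preimage_def t_def using nval_pos by simp_all
  have "(c mod nval + nval - t) mod nval = 0 \<longleftrightarrow> c mod nval = t"
    using add_mod_eq_iff[of 0 nval "c mod nval" t] t nval_pos by auto
  then show ?thesis using rmat_vec_oracle[OF c] by (simp add: pre_div pre_mod basis0_def t_def)
qed

lemma sum_phase_state_sq: "(\<Sum>x<nval. (phase_state x)\<^sup>2) = 1"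
  using nval_pos by (simp add: phase_state_def power_divide power_mult_distrib flip: power_mult)

lemma sum_lessThan_nstates: "(\<Sum>c<nstates. h c) = (\<Sum>i<nidx. \<Sum>y<nval. h (i * nval + y))"
  unfolding nstates_def by (rule sum_lessThan_mult_blocks)

lemma sum_tensor_phase_mult: "(\<Sum>c<nstates. tensor_phase a c * tensor_phase b c) = (\<Sum>i<nidx. a i * b i)"
proof -
  have "(\<Sum>c<nstates. tensor_phase a c * tensor_phase b c)
      = (\<Sum>i<nidx. \<Sum>y<nval. a i * b i * (phase_state y)\<^sup>2)"
    unfolding sum_lessThan_nstates tensor_phase_def
    by (intro sum.cong refl) (simp add: power2_eq_square mult_ac)
  then show ?thesis by (simp add: sum_distrib_left[symmetric] sum_phase_state_sq)
qed

lemma nidx_amp0_sq: "nidx * amp0\<^sup>2 = 1"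
  using nidx_ge_2 by (simp add: amp0_def power_divide)

lemma sum_uniform_state_sq: "(\<Sum>c<nstates. (uniform_state c)\<^sup>2) = 1"
  using sum_tensor_phase_mult[of "\<lambda>_. amp0" "\<lambda>_. amp0"] nidx_amp0_sq
  unfolding uniform_state_def by (simp add: power2_eq_square)

lemma rmat_vec_diffusion_tensor_phase:
  assumes c: "c < nstates"
  shows "rmat_vec nstates diffusion (tensor_phase a) c
       = tensor_phase (\<lambda>i. a i - 2 * (\<Sum>k<nidx. amp0 * a k) * amp0) c"
proof -
  have "(\<Sum>k<nstates. uniform_state k * tensor_phase a k) = (\<Sum>k<nidx. amp0 * a k)"
    unfolding uniform_state_def by (rule sum_tensor_phase_mult)
  then show ?thesis
    unfolding diffusion_def using c
    by (simp add: rmat_vec_householder sum_uniform_state_sq)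
      (simp add: tensor_phase_def uniform_state_def algebra_simps)
qed

lemma layer_diffusion_tensor_phase:
  assumes c: "c < nstates"
  shows "layer (tensor_phase a) diffusion c = tensor_phase (grover_step a) c"
proof -
  have "rmat_vec nstates diffusion (rmat_vec nstates oracle (tensor_phase a))
      = rmat_vec nstates diffusion (tensor_phase (\<lambda>i. oracle_sign i * a i))"
    by (rule rmat_vec_cong) (simp add: rmat_vec_oracle_tensor_phase)
  then show ?thesis using rmat_vec_diffusion_tensor_phase[OF c] by (simp add: grover_step_def)
qed

lemma foldl_layer_diffusion:
  "c < nstates \<Longrightarrow> foldl layer (tensor_phase a) (replicate t diffusion) c
             = tensor_phase ((grover_step ^^ t) a) c"
proof (induction t arbitrary: a)
  case 0
  then show ?case by simp
next
  case (Suc t)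
  have "foldl layer (tensor_phase a) (replicate (Suc t) diffusion) c
      = foldl layer (layer (tensor_phase a) diffusion) (replicate t diffusion) c"
    by (simp add: replicate_Suc)
  also have "\<dots> = foldl layer (tensor_phase (grover_step a)) (replicate t diffusion) c"
    by (rule foldl_rmat_vec_cong) (use layer_diffusion_tensor_phase Suc.prems in auto)
  also have "\<dots> = tensor_phase ((grover_step ^^ Suc t) a) c"
    using Suc by (simp only: funpow_Suc_right comp_def)
  finally show ?case .
qed

lemma sum_basis0_sq: "0 < n \<Longrightarrow> (\<Sum>x<n. (basis0 x)\<^sup>2) = 1"
proof -
  have "(basis0 x)\<^sup>2 = (if x = 0 then 1 else 0)" for x by (simp add: basis0_def)
  then show "0 < n \<Longrightarrow> ?thesis" by simp
qed

lemma phase_state_ne_basis0: "(\<Sum>x<nval. (phase_state x - basis0 x)\<^sup>2) \<noteq> 0"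
proof
  assume "(\<Sum>x<nval. (phase_state x - basis0 x)\<^sup>2) = 0"
  then have "(phase_state 1 - basis0 1)\<^sup>2 = 0"
    using nval_ge_2 by (subst (asm) sum_nonneg_eq_0_iff) auto
  then show False using nval_pos by (simp add: phase_state_def basis0_def)
qed

lemma basis0_ne_uniform_state: "(\<Sum>k<nstates. (basis0 k - uniform_state k)\<^sup>2) \<noteq> 0"
proof
  assume h: "(\<Sum>k<nstates. (basis0 k - uniform_state k)\<^sup>2) = 0"
  have "2 * 2 \<le> nstates" unfolding nstates_def by (rule mult_le_mono[OF nidx_ge_2 nval_ge_2])
  then have "(basis0 1 - uniform_state 1)\<^sup>2 = 0"
    using h by (subst (asm) sum_nonneg_eq_0_iff) auto
  moreover have "uniform_state 1 \<noteq> 0"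
    using nval_ge_2 nidx_ge_2 by (simp add: uniform_state_def tensor_phase_def phase_state_def amp0_def)
  ultimately show False by (simp add: basis0_def)
qed

lemma prepare_column0:
  assumes c: "c < nstates"
  shows "prepare c 0 = uniform_state c"
proof -
  have "prepare c 0 = rmat_vec nstates prepare basis0 c"
    unfolding rmat_vec_def basis0_def using c by (simp add: of_bool_def[symmetric])
  also have "\<dots> = uniform_state c"
    unfolding prepare_def
    by (rule rmat_vec_householder_diff[OF _ basis0_ne_uniform_state c])
      (use sum_basis0_sq sum_uniform_state_sq c in simp)
  finally show ?thesis .
qed

lemma rmat_vec_unphase_tensor_phase:
  assumes c: "c < nstates"
  shows "rmat_vec nstates unphase (tensor_phase a) c = a (c div nval) * basis0 (c mod nval)"
proof -
  have "rmat_vec nstates unphase (tensor_phase a) c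
      = (\<Sum>y<nval. unphase_block (c mod nval) y * tensor_phase a ((c div nval) * nval + y))"
    unfolding unphase_def nstates_def by (rule rmat_vec_block_diag) (use c nstates_def in simp)
  also have "\<dots> = a (c div nval) * rmat_vec nval unphase_block phase_state (c mod nval)"
    unfolding rmat_vec_def tensor_phase_def by (simp add: sum_distrib_left mult_ac)
  also have "rmat_vec nval unphase_block phase_state (c mod nval) = basis0 (c mod nval)"
    unfolding unphase_block_def using nval_pos
    by (intro rmat_vec_householder_diff)
      (use sum_phase_state_sq sum_basis0_sq phase_state_ne_basis0 in auto)
  finally show ?thesis .
qed

lemma foldl_layer_circuit:
  assumes c: "c < nstates"
  shows "foldl layer (\<lambda>k. prepare k 0) (replicate t diffusion @ [unphase, id_mat]) c
       = oracle_sign (c div nval) * (grover_step ^^ t) (\<lambda>_. amp0) (c div nval)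
         * (if c mod nval = val (c div nval) then 1 else 0)"
proof -
  define a where "a = (grover_step ^^ t) (\<lambda>_. amp0)"
  define v where "v = foldl layer (\<lambda>k. prepare k 0) (replicate t diffusion)"
  have v: "v k = tensor_phase a k" if k: "k < nstates" for k
  proof -
    have "v k = foldl layer uniform_state (replicate t diffusion) k"
      unfolding v_def by (rule foldl_rmat_vec_cong) (use prepare_column0 k in auto)
    also have "\<dots> = tensor_phase a k"
      unfolding uniform_state_def a_def by (rule foldl_layer_diffusion[OF k])
    finally show ?thesis .
  qed
  have w: "layer v unphase k = oracle_sign (k div nval) * a (k div nval) * basis0 (k mod nval)"
    if k: "k < nstates" for k
  proof -
    have "rmat_vec nstates oracle v = rmat_vec nstates oracle (tensor_phase a)"
      by (rule rmat_vec_cong) (use v in auto)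
    moreover have "rmat_vec nstates unphase (rmat_vec nstates oracle (tensor_phase a))
        = rmat_vec nstates unphase (tensor_phase (\<lambda>i. oracle_sign i * a i))"
      by (rule rmat_vec_cong) (use rmat_vec_oracle_tensor_phase in auto)
    ultimately show ?thesis using rmat_vec_unphase_tensor_phase[OF k] by simp
  qed
  have "foldl layer (\<lambda>k. prepare k 0) (replicate t diffusion @ [unphase, id_mat]) c
      = rmat_vec nstates oracle (layer v unphase) c"
    using c by (simp add: v_def rmat_vec_id_mat)
  also have "\<dots> = rmat_vec nstates oracle
      (\<lambda>c. oracle_sign (c div nval) * a (c div nval) * basis0 (c mod nval)) c"
    by (rule arg_cong[where f="\<lambda>f. f c"], rule rmat_vec_cong) (use w in auto)
  also have "\<dots> = oracle_sign (c div nval) * a (c div nval)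
      * (if c mod nval = val (c div nval) then 1 else 0)"
    using rmat_vec_oracle_basis0[OF c, of "\<lambda>i. oracle_sign i * a i"] by (simp add: mult.assoc)
  finally show ?thesis by (simp add: a_def)
qed

lemma unitary_circuit: "\<forall>U\<in>set (map cmat (circuit t)). unitary_on nstates U"
proof -
  have "unitary_on nstates (cmat prepare)"
    unfolding prepare_def by (rule unitary_householder[OF basis0_ne_uniform_state])
  moreover have "unitary_on nstates (cmat diffusion)"
    unfolding diffusion_def by (rule unitary_householder) (simp add: sum_uniform_state_sq)
  moreover have "unitary_on nstates (cmat unphase)"
    unfolding unphase_def nstates_def unphase_block_def
    by (rule unitary_block_diag[OF unitary_householder[OF phase_state_ne_basis0] nval_pos])
  ultimately show ?thesis by (auto simp: circuit_def unitary_id_mat)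
qed

lemma nm_run_circuit:
  assumes "nm_query B = Q" "nm_U B = map cmat (circuit t)" "qm Q = m1 + r"
    and "\<And>c. query_image Q f c = oracle_image c" and c: "c < nstates"
  shows "nm_run B f c 0 = complex_of_real
      (oracle_sign (c div nval) * (grover_step ^^ t) (\<lambda>_. amp0) (c div nval)
      * (if c mod nval = val (c div nval) then 1 else 0))"
proof -
  have "query_op Q f = cmat oracle"
    unfolding query_op_def cmat_def oracle_def assms(4) by (intro ext) simp
  then have "nm_run B f c 0 = foldl (\<lambda>v U. mat_vec nstates U (mat_vec nstates (cmat oracle) v))
      (\<lambda>k. complex_of_real (prepare k 0)) (map cmat (replicate t diffusion @ [unphase, id_mat])) c"
    unfolding nm_run_def run_ops_column using assms(1-3)
    by (simp add: nstates_eq circuit_def cmat_def)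
  then show ?thesis
    unfolding foldl_mat_vec_cmat using foldl_layer_circuit[OF c] by simp
qed

end


lemma sin_add_double: "sin ((x::real) + 2 * y) = sin x + 2 * sin y * cos (x + y)"
  using sin_add[of "x + y" y] sin_diff[of "x + y" y] by (simp add: algebra_simps)

lemma cos_add_double: "cos ((x::real) + 2 * y) = - cos x + 2 * cos y * cos (x + y)"
  using cos_add[of "x + y" y] cos_diff[of "x + y" y] by (simp add: algebra_simps)

context grover
begin

definition "marked = {i. i < nidx \<and> odd (val i)}"
definition "n_marked = card marked"
definition "sqrt_marked_frac = amp0 * sqrt n_marked"
definition "sqrt_unmarked_frac = amp0 * sqrt (nidx - n_marked)"
definition "theta = arcsin sqrt_marked_frac"

text \<open>Amplitude vectors constant on the marked and on the unmarked indices, with total weights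
  \<open>A\<^sup>2\<close> and \<open>B\<^sup>2\<close>: Grover iterations stay in this plane and rotate it by \<open>2 * theta\<close>.\<close>

definition "two_level A B =
  (\<lambda>i. if i < nidx \<and> odd (val i) then A / sqrt n_marked else B / sqrt (nidx - n_marked))"

lemma marked_subset: "marked \<subseteq> {..<nidx}"
  by (auto simp: marked_def)

lemma finite_marked: "finite marked"
  using marked_subset finite_subset by blast

lemma n_marked_le: "n_marked \<le> nidx"
  unfolding n_marked_def using card_mono[OF _ marked_subset] by simp

lemma sum_oracle_sign_two_level:
  "(\<Sum>k<nidx. amp0 * (oracle_sign k * two_level A B k))
   = - A * sqrt_marked_frac + B * sqrt_unmarked_frac"
proof -
  define g where "g k = amp0 * (oracle_sign k * two_level A B k)" for k
  have "{..<nidx} = marked \<union> ({..<nidx} - marked)" using marked_subset by auto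
  then have "(\<Sum>k<nidx. g k) = (\<Sum>k\<in>marked. g k) + (\<Sum>k\<in>{..<nidx} - marked. g k)"
    by (metis sum.subset_diff finite_lessThan marked_subset add.commute)
  also have "(\<Sum>k\<in>marked. g k) = (\<Sum>k\<in>marked. - (amp0 * A / sqrt n_marked))"
    by (intro sum.cong refl) (auto simp: g_def marked_def oracle_sign_def two_level_def)
  also have "(\<Sum>k\<in>{..<nidx} - marked. g k) = (\<Sum>k\<in>{..<nidx} - marked. amp0 * B / sqrt (nidx - n_marked))"
    by (intro sum.cong refl) (auto simp: g_def marked_def oracle_sign_def two_level_def)
  also have "(\<Sum>k\<in>marked. - (amp0 * A / sqrt n_marked)) = - (A * sqrt_marked_frac)"
    by (cases "n_marked = 0")
      (simp_all add: n_marked_def[symmetric] sqrt_marked_frac_def real_div_sqrt field_simps)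
  also have "(\<Sum>k\<in>{..<nidx} - marked. amp0 * B / sqrt (nidx - n_marked)) = B * sqrt_unmarked_frac"
  proof -
    have "card ({..<nidx} - marked) = nidx - n_marked"
      using marked_subset finite_marked by (simp add: card_Diff_subset n_marked_def)
    then show ?thesis
      by (cases "nidx - n_marked = 0")
        (simp_all add: sqrt_unmarked_frac_def field_simps real_div_sqrt del: of_nat_diff)
  qed
  finally show ?thesis by (simp add: g_def)
qed

lemma grover_step_two_level:
  fixes A B :: real
  assumes "0 < n_marked" "n_marked < nidx" "i < nidx"
  defines "s \<equiv> - A * sqrt_marked_frac + B * sqrt_unmarked_frac"
  shows "grover_step (two_level A B) i
       = two_level (- A - 2 * sqrt_marked_frac * s) (B - 2 * sqrt_unmarked_frac * s) i"
proof (cases "odd (val i)")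
  case True
  have "amp0 = sqrt_marked_frac / sqrt n_marked"
    using assms(1) by (simp add: sqrt_marked_frac_def)
  then show ?thesis
    unfolding grover_step_def sum_oracle_sign_two_level s_def[symmetric] using assms(3) True
    by (simp add: two_level_def oracle_sign_def diff_divide_distrib)
next
  case False
  have "amp0 = sqrt_unmarked_frac / sqrt (nidx - n_marked)"
    using assms(2) by (simp add: sqrt_unmarked_frac_def)
  then show ?thesis
    unfolding grover_step_def sum_oracle_sign_two_level s_def[symmetric] using assms(3) False
    by (simp add: two_level_def oracle_sign_def diff_divide_distrib)
qed

lemma sqrt_marked_frac_sq_add: "sqrt_marked_frac\<^sup>2 + sqrt_unmarked_frac\<^sup>2 = 1"
proof -
  have "sqrt_marked_frac\<^sup>2 = amp0\<^sup>2 * n_marked" "sqrt_unmarked_frac\<^sup>2 = amp0\<^sup>2 * (real nidx - n_marked)"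
    using n_marked_le
    by (simp_all add: sqrt_marked_frac_def sqrt_unmarked_frac_def power_mult_distrib of_nat_diff)
  then show ?thesis using nidx_amp0_sq by (simp add: algebra_simps)
qed

lemma sin_theta: "sin theta = sqrt_marked_frac"
  and cos_theta: "cos theta = sqrt_unmarked_frac"
proof -
  have nonneg: "0 \<le> sqrt_marked_frac" "0 \<le> sqrt_unmarked_frac"
    using nidx_ge_2 by (simp_all add: sqrt_marked_frac_def sqrt_unmarked_frac_def amp0_def)
  moreover have "sqrt_marked_frac \<le> 1"
  proof (rule power2_le_imp_le)
    show "sqrt_marked_frac\<^sup>2 \<le> 1\<^sup>2"
      unfolding one_power2 using sqrt_marked_frac_sq_add zero_le_power2[of sqrt_unmarked_frac]
      by linarith
  qed simp
  ultimately show "sin theta = sqrt_marked_frac"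
    unfolding theta_def by (simp add: sin_arcsin)
  have "cos theta = sqrt (1 - sqrt_marked_frac\<^sup>2)"
    unfolding theta_def using nonneg \<open>sqrt_marked_frac \<le> 1\<close> by (simp add: cos_arcsin)
  then show "cos theta = sqrt_unmarked_frac"
    using sqrt_marked_frac_sq_add nonneg by (simp add: eq_diff_eq[symmetric])
qed

lemma grover_step_cong: "(\<And>k. k < nidx \<Longrightarrow> a k = b k) \<Longrightarrow> i < nidx \<Longrightarrow> grover_step a i = grover_step b i"
  unfolding grover_step_def by simp

lemma grover_iterate:
  assumes K: "0 < n_marked" "n_marked < nidx"
  shows "i < nidx \<Longrightarrow> (grover_step ^^ t) (\<lambda>_. amp0) i
     = two_level ((-1)^t * sin ((2 * t + 1) * theta)) ((-1)^t * cos ((2 * t + 1) * theta)) i"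
proof (induction t arbitrary: i)
  case 0
  then show ?case
    using K by (simp add: two_level_def sin_theta cos_theta sqrt_marked_frac_def sqrt_unmarked_frac_def)
next
  case (Suc t)
  define e :: real where "e = (-1)^t"
  define \<alpha> where "\<alpha> = (2 * real t + 1) * theta"
  have next_angle: "(2 * real (Suc t) + 1) * theta = \<alpha> + 2 * theta"
    by (simp add: \<alpha>_def algebra_simps)
  have s: "- (e * sin \<alpha>) * sqrt_marked_frac + e * cos \<alpha> * sqrt_unmarked_frac = e * cos (\<alpha> + theta)"
    by (simp add: cos_add sin_theta cos_theta algebra_simps)
  have "(grover_step ^^ Suc t) (\<lambda>_. amp0) i = grover_step ((grover_step ^^ t) (\<lambda>_. amp0)) i"
    by simp
  also have "\<dots> = grover_step (two_level (e * sin \<alpha>) (e * cos \<alpha>)) i"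
    by (rule grover_step_cong) (use Suc in \<open>simp_all only: e_def \<alpha>_def\<close>)
  also have "\<dots> = two_level (- (e * sin \<alpha>) - 2 * sqrt_marked_frac * (e * cos (\<alpha> + theta)))
        (e * cos \<alpha> - 2 * sqrt_unmarked_frac * (e * cos (\<alpha> + theta))) i"
    unfolding grover_step_two_level[OF K Suc.prems] s ..
  also have "\<dots> = two_level ((-1)^Suc t * sin ((2 * real (Suc t) + 1) * theta))
        ((-1)^Suc t * cos ((2 * real (Suc t) + 1) * theta)) i"
    unfolding next_angle sin_add_double cos_add_double sin_theta cos_theta e_def
    by (simp add: algebra_simps)
  finally show ?case .
qed

lemma grover_iterate_marked_sq:
  assumes "0 < n_marked" "n_marked < nidx" "i < nidx" "odd (val i)"
  shows "((grover_step ^^ t) (\<lambda>_. amp0) i)\<^sup>2 = (sin ((2 * t + 1) * theta))\<^sup>2 / n_marked"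
  using grover_iterate[OF assms(1-3), of t] assms(3,4)
  by (simp add: two_level_def power_mult_distrib power_divide flip: power_mult)

end


section \<open>Elementary estimates\<close>

lemma le_two_sin:
  assumes "0 \<le> x" "x \<le> pi / 3"
  shows "x \<le> 2 * sin x"
proof -
  have "(\<lambda>x. 2 * sin x - x) 0 \<le> (\<lambda>x. 2 * sin x - x) x"
  proof (rule DERIV_nonneg_imp_nondecreasing[OF assms(1)])
    fix u assume u: "0 \<le> u" "u \<le> x"
    show "\<exists>y. ((\<lambda>x. 2 * sin x - x) has_real_derivative y) (at u) \<and> 0 \<le> y"
    proof (intro exI conjI)
      show "((\<lambda>x. 2 * sin x - x) has_real_derivative 2 * cos u - 1) (at u)"
        by (auto intro!: derivative_eq_intros)
      have "cos (pi / 3) \<le> cos u" using u assms by (intro cos_monotone_0_pi_le) auto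
      then show "0 \<le> 2 * cos u - 1" by (simp add: cos_60)
    qed
  qed
  then show ?thesis by simp
qed

lemma arcsin_bounds:
  fixes s :: real
  assumes "0 \<le> s" "s\<^sup>2 \<le> 1/2"
  shows "s \<le> arcsin s" "arcsin s \<le> 2 * s"
proof -
  have "s\<^sup>2 < (3/4)\<^sup>2" using assms by (simp add: power2_eq_square)
  then have "s < 3/4" by (rule power2_less_imp_less) simp
  have "3/2 \<le> sqrt (3::real)" by (rule real_le_rsqrt) (simp add: power2_eq_square)
  then have "s \<le> sin (pi / 3)" using \<open>s < 3/4\<close> by (simp add: sin_60)
  then have le: "arcsin s \<le> pi / 3"
    using assms pi_gt3 \<open>s < 3/4\<close> by (subst arcsin_le_iff) auto
  have ge: "0 \<le> arcsin s" using le_arcsin_iff[of s 0] assms \<open>s < 3/4\<close> by simp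
  have sin: "sin (arcsin s) = s" using assms \<open>s < 3/4\<close> by simp
  show "s \<le> arcsin s" using sin_x_le_x[OF ge] sin by simp
  show "arcsin s \<le> 2 * s" using le_two_sin[OF ge le] sin by simp
qed

text \<open>The Grover rotation angle \<open>arcsin s\<close> is only known up to a factor \<open>sqrt 2\<close> from the
  dyadic guess \<open>s0\<close>; the iteration count \<open>\<lfloor>1 / (8 * s0)\<rfloor>\<close> still brings the final angle into
  \<open>[1/8, 9/4]\<close>, where \<open>sin\<close> is bounded below.\<close>

lemma grover_angle_bounds:
  fixes s s0 :: real
  assumes s0: "0 < s0" "s0 \<le> s" and s: "s\<^sup>2 < 2 * s0\<^sup>2" "s\<^sup>2 \<le> 1/2"
  defines "x \<equiv> (2 * real (nat \<lfloor>1 / (8 * s0)\<rfloor>) + 1) * arcsin s"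
  shows "1/8 \<le> x" "x \<le> 9/4"
proof -
  define T where "T = nat \<lfloor>1 / (8 * s0)\<rfloor>"
  define y where "y = 1 / (8 * s0)"
  have y0: "0 < y" using s0 by (simp add: y_def)
  have Ty: "real T \<le> y" "y - 1 < real T" using y0 by (simp_all add: T_def y_def)
  have s_pos: "0 \<le> s" using s0 by simp
  note th = arcsin_bounds[OF s_pos s(2)]
  have "s\<^sup>2 < (3/4)\<^sup>2" using s by (simp add: power2_eq_square)
  then have "s < 3/4" by (rule power2_less_imp_less) simp
  have "0 < s0 * s0" using s0 by simp
  then have "s\<^sup>2 < (3/2 * s0)\<^sup>2" using s(1) by (simp add: power2_eq_square)
  then have "s < 3/2 * s0" by (rule power2_less_imp_less) (use s0 in simp)
  have "x \<le> (2 * y + 1) * (2 * s)"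
    unfolding x_def T_def[symmetric] using Ty th s_pos by (intro mult_mono) auto
  also have "\<dots> = s / (2 * s0) + 2 * s" using s0 by (simp add: y_def field_simps)
  also have "s / (2 * s0) \<le> 3/4" using \<open>s < 3/2 * s0\<close> s0 by (simp add: field_simps)
  finally show "x \<le> 9/4" using \<open>s < 3/4\<close> by simp
  show "1/8 \<le> x"
  proof (cases "1 \<le> y")
    case True
    have "1/4 - s0 = (2 * (y - 1) + 1) * s0" using s0 by (simp add: y_def field_simps)
    also have "\<dots> \<le> (2 * real T + 1) * arcsin s"
      using Ty th s0 True by (intro mult_mono) auto
    finally show ?thesis using True s0 by (simp add: x_def T_def y_def field_simps)
  next
    case False
    then have "1/8 < s0" using s0 by (simp add: y_def field_simps)
    moreover have "arcsin s \<le> x"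
      unfolding x_def using th s_pos by (simp add: mult_le_cancel_right1)
    ultimately show ?thesis using th s0 by simp
  qed
qed

definition success_bound :: real where
  "success_bound = (sin (1/8))\<^sup>2"

lemma success_bound_pos: "0 < success_bound"
  and success_bound_le_1: "success_bound \<le> 1"
proof -
  have "0 < sin (1/8::real)" using pi_gt3 by (intro sin_gt_zero) auto
  then show "0 < success_bound" by (simp add: success_bound_def)
  show "success_bound \<le> 1" by (simp add: success_bound_def abs_square_le_1)
qed

lemma success_bound_le_sin_sq:
  fixes s s0 :: real
  assumes "0 < s0" "s0 \<le> s" "s\<^sup>2 < 2 * s0\<^sup>2" "s\<^sup>2 \<le> 1/2"
  shows "success_bound \<le> (sin ((2 * real (nat \<lfloor>1 / (8 * s0)\<rfloor>) + 1) * arcsin s))\<^sup>2"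
proof -
  define x where "x = (2 * real (nat \<lfloor>1 / (8 * s0)\<rfloor>) + 1) * arcsin s"
  note x = grover_angle_bounds[OF assms, folded x_def]
  have "sin (1/8) \<le> sin x"
  proof (cases "x \<le> pi/2")
    case True
    then show ?thesis using x pi_gt3 by (intro sin_monotone_2pi_le) auto
  next
    case False
    have "sin (1/8) \<le> sin (pi - x)" using x False pi_gt3 by (intro sin_monotone_2pi_le) auto
    then show ?thesis by simp
  qed
  moreover have "0 \<le> sin (1/8::real)" using pi_gt3 by (intro sin_ge_zero) auto
  ultimately show ?thesis unfolding success_bound_def x_def[symmetric] by (intro power_mono) auto
qed

lemma repetition_miss_bound:
  fixes K L j :: nat and q :: real
  assumes q: "0 < q" "q \<le> 1" and K: "1 \<le> K" "K < 2 ^ (j + 1)"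
    and L: "2 ^ (j + 1) * (real j + 3) / q \<le> real L"
  shows "real K * (1 - q / K) ^ L \<le> 1/4"
proof -
  define x where "x = q / K"
  have x: "0 \<le> x" "x \<le> 1" using q K by (auto simp: x_def field_simps)
  have K_le: "real K \<le> 2 ^ (j + 1)"
    using K(2) by (metis of_nat_less_numeral_power_cancel_iff less_imp_le)
  have "real j + 3 \<le> x * L"
  proof -
    have "real K * (real j + 3) \<le> 2 ^ (j + 1) * (real j + 3)"
      using K_le by (intro mult_right_mono) auto
    also have "\<dots> \<le> q * real L" using L q by (simp add: field_simps)
    finally show ?thesis using K by (simp add: x_def field_simps)
  qed
  have "(1 - x) ^ L \<le> exp (- x) ^ L"
    using x by (intro power_mono) (auto simp: exp_ge_add_one_self[of "-x", simplified])
  also have "\<dots> = exp (- (x * L))" by (simp add: exp_of_nat_mult[symmetric] mult.commute)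
  also have "\<dots> \<le> exp (- (real j + 3))" using \<open>real j + 3 \<le> x * L\<close> by simp
  also have "\<dots> = inverse (exp 1 ^ (j + 3))"
    using exp_of_nat_mult[of "j + 3" "1::real"] by (subst exp_minus) simp
  also have "\<dots> \<le> inverse (2 ^ (j + 3))"
    using exp_ge_add_one_self[of 1] by (intro le_imp_inverse_le power_mono) auto
  finally have "real K * (1 - x) ^ L \<le> 2 ^ (j + 1) * inverse (2 ^ (j + 3))"
    using K_le x by (intro mult_mono) auto
  also have "\<dots> = 1/4" by (simp add: power_add field_simps)
  finally show ?thesis by (simp add: x_def)
qed

lemma sum_sqrt_power2_le: "(\<Sum>j<Suc J. sqrt (2 ^ j)) \<le> 4 * sqrt (2 ^ J :: real)"
proof (induction J)
  case 0
  then show ?case by simp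
next
  case (Suc J)
  have "4/3 \<le> sqrt (2::real)" by (rule real_le_rsqrt) (simp add: power2_eq_square)
  then have "4 * sqrt (2 ^ J) \<le> 3 * sqrt 2 * sqrt (2 ^ J :: real)"
    by (intro mult_right_mono) auto
  have "(\<Sum>j<Suc (Suc J). sqrt (2 ^ j)) = (\<Sum>j<Suc J. sqrt (2 ^ j)) + sqrt 2 * sqrt (2 ^ J :: real)"
    by (simp add: real_sqrt_mult)
  also have "\<dots> \<le> 4 * (sqrt 2 * sqrt (2 ^ J))"
    using Suc.IH \<open>4 * sqrt (2 ^ J) \<le> _\<close> by linarith
  finally show ?case by (simp add: real_sqrt_mult)
qed

lemma nat_floor_log_bounds:
  fixes R :: real
  assumes R: "1 \<le> R"
  shows "2 ^ nat \<lfloor>log 2 R\<rfloor> \<le> R" "R < 2 ^ (nat \<lfloor>log 2 R\<rfloor> + 1)"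
    "real (nat \<lfloor>log 2 R\<rfloor>) \<le> log 2 R"
proof -
  have e: "real (nat \<lfloor>log 2 R\<rfloor>) = of_int \<lfloor>log 2 R\<rfloor>" using R by simp
  show le: "real (nat \<lfloor>log 2 R\<rfloor>) \<le> log 2 R" unfolding e by simp
  have "(2::real) ^ nat \<lfloor>log 2 R\<rfloor> = 2 powr real (nat \<lfloor>log 2 R\<rfloor>)" by (simp add: powr_realpow)
  also have "\<dots> \<le> 2 powr log 2 R" using le by (intro powr_mono) auto
  finally show "2 ^ nat \<lfloor>log 2 R\<rfloor> \<le> R" using R by simp
  have "R = 2 powr log 2 R" using R by simp
  also have "\<dots> < 2 powr (real (nat \<lfloor>log 2 R\<rfloor>) + 1)"
    unfolding e by (intro powr_less_mono) linarith+
  also have "\<dots> = 2 ^ (nat \<lfloor>log 2 R\<rfloor> + 1)" by (simp add: powr_realpow[symmetric] powr_add)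
  finally show "R < 2 ^ (nat \<lfloor>log 2 R\<rfloor> + 1)" .
qed

lemma prod_le_factor:
  fixes f :: "'a \<Rightarrow> real"
  assumes "finite I" "j \<in> I" "\<And>i. i \<in> I \<Longrightarrow> 0 \<le> f i \<and> f i \<le> 1"
  shows "prod f I \<le> f j"
proof -
  have "prod f I = f j * prod f (I - {j})" using assms(1,2) by (rule prod.remove)
  also have "\<dots> \<le> f j * 1"
    using assms by (intro mult_left_mono prod_le_1) auto
  finally show ?thesis by simp
qed

lemma prod_list_map_eq_prod_nth: "prod_list (map h xs) = (\<Prod>l<length xs. h (xs ! l))"
proof (induction xs)
  case (Cons x xs)
  have "(\<Prod>l<length (x # xs). h ((x # xs) ! l)) = h x * (\<Prod>l<length xs. h (xs ! l))"
    unfolding length_Cons prod.lessThan_Suc_shift by simp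
  then show ?case using Cons by simp
qed simp

lemma prod_list_concat_replicate:
  "prod_list (map h (concat (map (\<lambda>j. replicate (k j) (x j)) [0..<n]))) = (\<Prod>j<n. h (x j) ^ k j)"
  by (induction n) (simp_all add: prod_list_replicate)

lemma sum_list_concat_replicate:
  "sum_list (map h (concat (map (\<lambda>j. replicate (k j) (x j)) [0..<n]))) = (\<Sum>j<n. k j * h (x j))"
  by (induction n) (simp_all add: sum_list_replicate)


section \<open>Query cost of the dyadic schedule\<close>

text \<open>At dyadic scale \<open>j\<close> (about \<open>2^j\<close> marked indices out of \<open>n\<close>) Grover search is run
  \<open>repetitions j\<close> times with \<open>grover_iters n j\<close> iterations each.\<close>

definition grover_iters :: "nat \<Rightarrow> nat \<Rightarrow> nat" where
  "grover_iters n j = nat \<lfloor>1 / (8 * sqrt (2 ^ j / real n))\<rfloor>"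

definition repetitions :: "nat \<Rightarrow> nat" where
  "repetitions j = nat \<lceil>2 ^ (j + 1) * (real j + 3) / success_bound\<rceil>"

lemma repetitions_ge: "2 ^ (j + 1) * (real j + 3) / success_bound \<le> real (repetitions j)"
  unfolding repetitions_def by linarith

lemma repetitions_pos: "0 < repetitions j"
proof -
  have "0 < 2 ^ (j + 1) * (real j + 3) / success_bound" using success_bound_pos by simp
  then show ?thesis unfolding repetitions_def by linarith
qed

lemma repetitions_le: "real (repetitions j) \<le> 4 * 2 ^ j * (real j + 3) / success_bound"
proof -
  define z where "z = 2 ^ (j + 1) * (real j + 3) / success_bound"
  have "1 * 1 \<le> (2::real) ^ (j + 1) * (real j + 3)" by (intro mult_mono one_le_power) auto
  then have "1 \<le> z"
    using success_bound_pos success_bound_le_1 unfolding z_def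
    by (simp add: le_divide_eq)
  then have "real (repetitions j) \<le> 2 * z" unfolding repetitions_def z_def[symmetric] by linarith
  then show ?thesis by (simp add: z_def field_simps)
qed

lemma grover_iters_le:
  assumes "2 ^ j \<le> real n"
  shows "real (grover_iters n j) + 2 \<le> 3 * (sqrt n / sqrt (2 ^ j))"
proof -
  define a where "a = sqrt (2 ^ j :: real)"
  define b where "b = sqrt (real n)"
  have a: "0 < a" "a \<le> b" using assms by (simp_all add: a_def b_def real_sqrt_le_mono)
  have "0 \<le> 1 / (8 * sqrt (2 ^ j / real n))" by simp
  then have "real (grover_iters n j) \<le> 1 / (8 * sqrt (2 ^ j / real n))"
    unfolding grover_iters_def by linarith
  also have "\<dots> = b / (8 * a)" using a by (simp add: a_def b_def real_sqrt_divide field_simps)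
  also have "\<dots> \<le> b / a" using a by (simp add: field_simps)
  finally have "real (grover_iters n j) \<le> b / a" .
  moreover have "1 \<le> b / a" using a by simp
  ultimately show ?thesis unfolding a_def b_def by linarith
qed

lemma repetitions_grover_iters_le:
  assumes "2 ^ j \<le> real n"
  shows "real (repetitions j) * (real (grover_iters n j) + 2)
       \<le> 12 * (real j + 3) * sqrt n / success_bound * sqrt (2 ^ j)"
proof -
  have "real (repetitions j) * (real (grover_iters n j) + 2)
      \<le> (4 * 2 ^ j * (real j + 3) / success_bound) * (3 * (sqrt n / sqrt (2 ^ j)))"
    using repetitions_le grover_iters_le[OF assms] success_bound_pos by (intro mult_mono) auto
  also have "\<dots> = 12 * (real j + 3) * sqrt n / success_bound * sqrt (2 ^ j)"
    using success_bound_pos by (simp add: field_simps real_sqrt_mult[symmetric] flip: power_add)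
  finally show ?thesis .
qed

lemma sum_repetitions_grover_iters_le:
  assumes "2 ^ J \<le> real n"
  shows "real (\<Sum>j<Suc J. repetitions j * (grover_iters n j + 2))
       \<le> 12 * (real J + 3) * sqrt n / success_bound * (4 * sqrt (2 ^ J))"
proof -
  have "real (\<Sum>j<Suc J. repetitions j * (grover_iters n j + 2))
      = (\<Sum>j<Suc J. real (repetitions j) * (real (grover_iters n j) + 2))"
    by (simp only: of_nat_sum of_nat_mult of_nat_add of_nat_numeral)
  also have "\<dots> \<le> (\<Sum>j<Suc J. 12 * (real J + 3) * sqrt n / success_bound * sqrt (2 ^ j))"
  proof (intro sum_mono)
    fix j assume "j \<in> {..<Suc J}"
    then have "(2::real) ^ j \<le> 2 ^ J" by (intro power_increasing) auto
    then have "2 ^ j \<le> real n" using assms by linarith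
    then have "real (repetitions j) * (real (grover_iters n j) + 2)
        \<le> 12 * (real j + 3) * sqrt n / success_bound * sqrt (2 ^ j)"
      by (rule repetitions_grover_iters_le)
    also have "\<dots> \<le> 12 * (real J + 3) * sqrt n / success_bound * sqrt (2 ^ j)"
      using \<open>j \<in> _\<close> success_bound_pos by (auto intro!: mult_right_mono divide_right_mono)
    finally show "real (repetitions j) * (real (grover_iters n j) + 2)
        \<le> 12 * (real J + 3) * sqrt n / success_bound * sqrt (2 ^ j)" .
  qed
  also have "\<dots> = 12 * (real J + 3) * sqrt n / success_bound * (\<Sum>j<Suc J. sqrt (2 ^ j))"
    by (rule sum_distrib_left[symmetric])
  also have "\<dots> \<le> 12 * (real J + 3) * sqrt n / success_bound * (4 * sqrt (2 ^ J))"
    using sum_sqrt_power2_le[of J] success_bound_pos by (intro mult_left_mono) auto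
  finally show ?thesis .
qed

lemma query_cost_le:
  fixes R :: real
  assumes R: "1 \<le> R" "R \<le> real N" and n: "real N \<le> real n" "real n \<le> 4 * real N"
  defines "J \<equiv> nat \<lfloor>log 2 R\<rfloor>"
  shows "real (\<Sum>j<Suc J. repetitions j * (grover_iters n j + 2))
       \<le> 384 / success_bound * sqrt (real N * R) * max (log 2 R) 1"
proof -
  have J: "2 ^ J \<le> R" "real J \<le> log 2 R" using nat_floor_log_bounds[OF R(1)] by (auto simp: J_def)
  then have "2 ^ J \<le> real n" using R n by linarith
  then have "real (\<Sum>j<Suc J. repetitions j * (grover_iters n j + 2))
      \<le> 12 * (real J + 3) * sqrt n / success_bound * (4 * sqrt (2 ^ J))"
    by (rule sum_repetitions_grover_iters_le)
  also have "\<dots> \<le> 12 * (4 * max (log 2 R) 1) * (2 * sqrt (real N)) / success_bound * (4 * sqrt R)"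
  proof -
    have "sqrt n \<le> sqrt (4 * real N)" using n by (intro real_sqrt_le_mono) auto
    then have "sqrt n \<le> 2 * sqrt (real N)" by (simp add: real_sqrt_mult)
    moreover have "real J + 3 \<le> 4 * max (log 2 R) 1" using J by linarith
    moreover have "sqrt (2 ^ J) \<le> sqrt R" using J by (intro real_sqrt_le_mono) auto
    ultimately show ?thesis using success_bound_pos
      by (intro mult_mono divide_right_mono) (auto intro: mult_nonneg_nonneg)
  qed
  also have "\<dots> = 384 / success_bound * sqrt (real N * R) * max (log 2 R) 1"
    by (simp add: real_sqrt_mult field_simps)
  finally show ?thesis .
qed


section \<open>The summation algorithm\<close>

definition index_query :: "nat \<Rightarrow> nat \<Rightarrow> nat \<Rightarrow> (real \<Rightarrow> nat) \<Rightarrow> (nat, real) qquery" where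
  "index_query N m1 r \<beta> = \<lparr>qm = m1 + r, qm1 = m1, qm2 = r, qZ = {..<N}, qtau = id, qbeta = \<beta>\<rparr>"

definition grover_alg :: "nat \<Rightarrow> nat \<Rightarrow> nat \<Rightarrow> (real \<Rightarrow> nat) \<Rightarrow> nat \<Rightarrow> (nat, real) nm_alg" where
  "grover_alg N m1 r \<beta> t = \<lparr>nm_query = index_query N m1 r \<beta>, nm_U = map cmat (grover.circuit m1 r t)\<rparr>"

definition quantize :: "real \<Rightarrow> real \<Rightarrow> real \<Rightarrow> nat" where
  "quantize V \<delta> v = min (nat \<lfloor>(v + V) / \<delta>\<rfloor>) (nat \<lceil>2 * V / \<delta>\<rceil>)"

definition encode :: "nat \<Rightarrow> real \<Rightarrow> real \<Rightarrow> real \<Rightarrow> nat" where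
  "encode M V \<delta> v = (if real M \<le> \<bar>v\<bar> then 1 else 0) + 2 * quantize V \<delta> v"

definition decode_sum :: "nat \<Rightarrow> nat \<Rightarrow> real \<Rightarrow> real \<Rightarrow> nat list \<Rightarrow> real" where
  "decode_sum N r V \<delta> xs =
     1 / real N * (\<Sum>x\<in>{x \<in> set xs. odd (x mod 2 ^ r)}. real ((x mod 2 ^ r) div 2) * \<delta> - V)"

definition repeated_grover :: "nat \<Rightarrow> nat \<Rightarrow> nat \<Rightarrow> nat \<Rightarrow> real \<Rightarrow> real \<Rightarrow> nat \<Rightarrow> (nat, real, real) qalg" where
  "repeated_grover N m1 r M V \<delta> J =
     \<lparr>q_algs = concat (map (\<lambda>j. replicate (repetitions j)
                 (grover_alg N m1 r (encode M V \<delta>) (grover_iters (2 ^ m1) j))) [0..<Suc J]),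
      q_b = (\<lambda>_ _. 0), q_phi = decode_sum N r V \<delta>\<rparr>"

lemma abs_quantize_error:
  assumes "\<bar>v\<bar> \<le> V" "0 < \<delta>"
  shows "\<bar>v - (real (quantize V \<delta> v) * \<delta> - V)\<bar> \<le> \<delta>"
proof -
  define z where "z = (v + V) / \<delta>"
  have z: "0 \<le> z" "z \<le> 2 * V / \<delta>" using assms by (simp_all add: z_def divide_right_mono)
  then have "\<lfloor>z\<rfloor> \<le> \<lceil>2 * V / \<delta>\<rceil>" by (meson floor_le_ceiling order.trans floor_mono)
  then have q: "real (quantize V \<delta> v) = of_int \<lfloor>z\<rfloor>" using z by (simp add: quantize_def z_def[symmetric])
  have "v - (of_int \<lfloor>z\<rfloor> * \<delta> - V) = (z - of_int \<lfloor>z\<rfloor>) * \<delta>" using assms by (simp add: z_def field_simps)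
  moreover have "0 \<le> z - of_int \<lfloor>z\<rfloor>" "z - of_int \<lfloor>z\<rfloor> \<le> 1" by linarith+
  ultimately show ?thesis using assms unfolding q by (simp add: abs_mult mult_le_cancel_right1)
qed

lemma encode_less: "encode M V \<delta> v < 2 ^ (nat \<lceil>2 * V / \<delta>\<rceil> + 2)"
proof -
  define C where "C = nat \<lceil>2 * V / \<delta>\<rceil>"
  have "encode M V \<delta> v \<le> 2 * C + 1" by (simp add: encode_def quantize_def C_def min_def)
  also have "\<dots> < 4 * 2 ^ C" using less_exp[of C] by linarith
  finally show ?thesis by (simp add: C_def)
qed

lemma grover_alg_in_repeated_grover:
  "j \<le> J \<Longrightarrow> grover_alg N m1 r (encode M V \<delta>) (grover_iters (2 ^ m1) j)
     \<in> set (q_algs (repeated_grover N m1 r M V \<delta> J))"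
  using repetitions_pos[of j] by (force simp: repeated_grover_def)

section \<open>The unit ball of \<open>L\<^sub>p\<close>\<close>

lemma sum_abs_powr_le_of_unit_ball:
  assumes "0 < p" "f \<in> unit_ball_Lp p N"
  shows "(\<Sum>i<N. \<bar>f i\<bar> powr p) \<le> real N"
proof (cases "N = 0")
  case False
  define X where "X = 1 / real N * (\<Sum>i<N. \<bar>f i\<bar> powr p)"
  have "X powr (1 / p) \<le> 1" using assms(2) by (simp add: unit_ball_Lp_def Lp_norm_def X_def)
  then have "X \<le> 1" using assms(1) gr_one_powr[of X "1 / p"] by fastforce
  then show ?thesis using False by (simp add: X_def field_simps)
qed simp

lemma abs_le_of_unit_ball:
  assumes "1 \<le> p" "f \<in> unit_ball_Lp p N" "i < N"
  shows "\<bar>f i\<bar> \<le> real N"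
proof (cases "\<bar>f i\<bar> \<le> 1")
  case True
  then show ?thesis using assms(3) by linarith
next
  case False
  then have "\<bar>f i\<bar> = \<bar>f i\<bar> powr 1" by simp
  also have "\<dots> \<le> \<bar>f i\<bar> powr p" using False assms(1) by (intro powr_mono) auto
  also have "\<dots> \<le> (\<Sum>i<N. \<bar>f i\<bar> powr p)" using assms(3) by (intro member_le_sum) auto
  also have "\<dots> \<le> real N" using assms(1,2) by (intro sum_abs_powr_le_of_unit_ball) auto
  finally show ?thesis .
qed

lemma card_ge_mult_le_of_unit_ball:
  assumes "0 < p" "0 \<le> t" "f \<in> unit_ball_Lp p N"
  shows "real (card {i. i < N \<and> t \<le> \<bar>f i\<bar>}) * t powr p \<le> real N"
proof -
  define A where "A = {i. i < N \<and> t \<le> \<bar>f i\<bar>}"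
  have "real (card A) * t powr p = (\<Sum>i\<in>A. t powr p)" by simp
  also have "\<dots> \<le> (\<Sum>i\<in>A. \<bar>f i\<bar> powr p)"
    using assms by (intro sum_mono powr_mono2) (auto simp: A_def)
  also have "\<dots> \<le> (\<Sum>i<N. \<bar>f i\<bar> powr p)" by (intro sum_mono2) (auto simp: A_def)
  also have "\<dots> \<le> real N" using assms by (intro sum_abs_powr_le_of_unit_ball)
  finally show ?thesis by (simp add: A_def)
qed


context grover
begin

lemma nm_queries_grover_alg: "nm_queries (grover_alg N m1 r \<beta> t) = t + 2"
  by (simp add: nm_queries_def grover_alg_def circuit_def)

lemma n_q_repeated_grover:
  "n_q (repeated_grover N m1 r M V \<delta> J) = (\<Sum>j<Suc J. repetitions j * (grover_iters nidx j + 2))"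
proof -
  have nq: "n_q A = sum_list (map nm_queries (q_algs A))" for A :: "(nat, real, real) qalg"
    unfolding n_q_def q_k_def by (simp add: sum_list_sum_nth atLeast0LessThan)
  show ?thesis
    unfolding nq repeated_grover_def qalg.select_convs sum_list_concat_replicate nm_queries_grover_alg
    by (simp add: nidx_def)
qed

end

locale grover_sum = grover m1 r val
  for m1 r :: nat and val :: "nat \<Rightarrow> nat" +
  fixes N M :: nat and V \<delta> :: real and f :: "nat \<Rightarrow> real"
  assumes val_eq: "val = (\<lambda>i. if i < N then encode M V \<delta> (f i) else 0)"
    and N_pos: "1 \<le> N" and two_N_le: "2 * N \<le> 2 ^ m1" and \<delta>_pos: "0 < \<delta>"
    and r_eq: "r = nat \<lceil>2 * V / \<delta>\<rceil> + 2" and abs_f_le: "\<And>i. i < N \<Longrightarrow> \<bar>f i\<bar> \<le> V"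
begin

abbreviation "sum_alg J \<equiv> repeated_grover N m1 r M V \<delta> J"

lemma val_apply: "val i = (if i < N then encode M V \<delta> (f i) else 0)"
  by (simp add: val_eq)

lemma N_le_nidx: "N \<le> nidx"
  using two_N_le by (simp add: nidx_def)

lemma valid_index_query: "valid_query {..<N} (index_query N m1 r (encode M V \<delta>))"
  using N_pos two_N_le m1_ge_1 r_ge_1 encode_less[of M V \<delta>]
  unfolding valid_query_def index_query_def r_eq by (auto simp: lessThan_empty_iff)

lemma query_image_index_query: "query_image (index_query N m1 r (encode M V \<delta>)) f c = oracle_image c"
proof (cases "c div nval < N")
  case True
  then show ?thesis
    unfolding query_image_def oracle_image_def index_query_def Let_def by (simp add: val_apply nval_def)
next
  case False
  then have "oracle_image c = c" unfolding oracle_image_def by (simp add: val_apply)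
  then show ?thesis
    unfolding query_image_def index_query_def Let_def using False by (simp add: nval_def)
qed

lemma sq_nm_run_grover_alg:
  assumes c: "c < nstates"
  shows "(cmod (nm_run (grover_alg N m1 r (encode M V \<delta>) t) f c 0))\<^sup>2
       = ((grover_step ^^ t) (\<lambda>_. amp0) (c div nval))\<^sup>2
         * (if c mod nval = val (c div nval) then 1 else 0)"
proof -
  have "(oracle_sign (c div nval))\<^sup>2 = 1"
    by (simp add: oracle_sign_def power_even_eq[symmetric] flip: power_mult)
  moreover have "nm_run (grover_alg N m1 r (encode M V \<delta>) t) f c 0 = complex_of_real
      (oracle_sign (c div nval) * (grover_step ^^ t) (\<lambda>_. amp0) (c div nval)
       * (if c mod nval = val (c div nval) then 1 else 0))"
    by (rule nm_run_circuit[OF _ _ _ query_image_index_query c])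
      (simp_all add: grover_alg_def index_query_def)
  ultimately show ?thesis
    by (simp only: norm_of_real power2_abs) (simp add: power_mult_distrib)
qed

lemma valid_grover_alg: "valid_nm_alg {..<N} (grover_alg N m1 r (encode M V \<delta>) t)"
  using valid_index_query unitary_circuit[of t] unfolding valid_nm_alg_def grover_alg_def
  by (simp add: index_query_def nstates_eq circuit_def)

lemma set_sum_alg: "B \<in> set (q_algs (sum_alg J)) \<Longrightarrow> \<exists>t. B = grover_alg N m1 r (encode M V \<delta>) t"
  by (auto simp: repeated_grover_def)

lemma q_qubits_sum_alg: "l < q_k (sum_alg J) \<Longrightarrow> q_qubits (sum_alg J) l = m1 + r"
  using set_sum_alg[OF nth_mem, of l J]
  by (auto simp: q_qubits_def q_k_def grover_alg_def index_query_def)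

lemma valid_sum_alg: "valid_qalg {..<N} (sum_alg J)"
  unfolding valid_qalg_def
proof (intro conjI ballI allI impI)
  show "1 \<le> q_k (sum_alg J)"
    using grover_alg_in_repeated_grover[of 0 J N m1 r M V \<delta>]
    by (cases "q_algs (sum_alg J)") (auto simp: q_k_def)
  show "valid_nm_alg {..<N} B" if "B \<in> set (q_algs (sum_alg J))" for B
    using set_sum_alg[OF that] valid_grover_alg by blast
qed (simp add: repeated_grover_def)

lemma marked_eq: "marked = {i. i < N \<and> real M \<le> \<bar>f i\<bar>}"
  using N_le_nidx unfolding marked_def by (auto simp: val_apply encode_def)

definition "marked_outcome i = i * nval + val i"

lemma marked_outcome_div [simp]: "marked_outcome i div nval = i"
  and marked_outcome_mod [simp]: "marked_outcome i mod nval = val i"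
  using val_less_nval[of i] by (simp_all add: marked_outcome_def)

text \<open>The basis states whose value register holds the oracle answer for their index: the only
  possible outcomes of the Grover stages.\<close>

definition "answered = {x. x < nstates \<and> x mod nval = val (x div nval)}"

lemma inj_marked_outcome: "inj marked_outcome"
  by (rule injI) (metis marked_outcome_div)

lemma marked_outcome_less: "i \<in> marked \<Longrightarrow> marked_outcome i < nstates"
  unfolding marked_outcome_def marked_def by (auto intro: block_less val_less_nval)

lemma n_marked_le_N: "n_marked \<le> N"
  using card_mono[of "{..<N}" marked] by (auto simp: n_marked_def marked_eq)

lemma odd_outcomes_eq_marked_outcomes:
  assumes consistent: "set xs \<subseteq> answered" and complete: "marked_outcome ` marked \<subseteq> set xs"
  shows "{x \<in> set xs. odd (x mod nval)} = marked_outcome ` marked"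
proof (intro equalityI subsetI)
  fix x assume "x \<in> {x \<in> set xs. odd (x mod nval)}"
  then have x: "x \<in> set xs" "odd (x mod nval)" by auto
  have ans: "x < nstates" "x mod nval = val (x div nval)"
    using consistent x(1) by (auto simp: answered_def)
  then have "x = marked_outcome (x div nval)"
    using div_mult_mod_eq[of x nval] by (simp add: marked_outcome_def)
  moreover have "x div nval \<in> marked"
    using ans x(2) div_nval_less by (simp add: marked_def)
  ultimately show "x \<in> marked_outcome ` marked" by blast
next
  fix x assume "x \<in> marked_outcome ` marked"
  then show "x \<in> {x \<in> set xs. odd (x mod nval)}" using complete by (auto simp: marked_def)
qed

lemma decode_sum_eq:
  assumes "set xs \<subseteq> answered" "marked_outcome ` marked \<subseteq> set xs"
  shows "decode_sum N r V \<delta> xs = 1 / real N * (\<Sum>i\<in>marked. real (quantize V \<delta> (f i)) * \<delta> - V)"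
proof -
  have "val i div 2 = quantize V \<delta> (f i)" if "i \<in> marked" for i
    using that unfolding marked_eq by (simp add: val_apply encode_def)
  then show ?thesis
    unfolding decode_sum_def nval_def[symmetric]
    unfolding odd_outcomes_eq_marked_outcomes[OF assms]
    by (simp add: sum.reindex[OF inj_on_subset[OF inj_marked_outcome]])
qed

lemma abs_S_NM'_minus_decode_sum_le:
  assumes "set xs \<subseteq> answered" "marked_outcome ` marked \<subseteq> set xs"
  shows "\<bar>S_NM' N M f - decode_sum N r V \<delta> xs\<bar> \<le> \<delta>"
proof -
  have "S_NM' N M f = 1 / real N * (\<Sum>i\<in>marked. f i)"
    unfolding S_NM'_def marked_eq by simp
  then have "S_NM' N M f - decode_sum N r V \<delta> xs
      = 1 / real N * (\<Sum>i\<in>marked. f i - (real (quantize V \<delta> (f i)) * \<delta> - V))"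
    unfolding decode_sum_eq[OF assms] by (simp only: sum_subtractf right_diff_distrib)
  then have "\<bar>S_NM' N M f - decode_sum N r V \<delta> xs\<bar>
      = 1 / real N * \<bar>\<Sum>i\<in>marked. f i - (real (quantize V \<delta> (f i)) * \<delta> - V)\<bar>"
    by (simp add: abs_mult)
  also have "\<dots> \<le> 1 / real N * (\<Sum>i\<in>marked. \<bar>f i - (real (quantize V \<delta> (f i)) * \<delta> - V)\<bar>)"
    by (intro mult_left_mono sum_abs) simp
  also have "\<dots> \<le> 1 / real N * (\<Sum>i\<in>marked. \<delta>)"
    by (intro mult_left_mono sum_mono abs_quantize_error abs_f_le \<delta>_pos) (simp_all add: marked_eq)
  also have "\<dots> \<le> \<delta>"
    using n_marked_le_N N_pos \<delta>_pos by (simp add: n_marked_def field_simps mult_right_mono)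
  finally show ?thesis .
qed

lemma sq_nm_run_grover_alg_le_1:
  assumes "c < nstates"
  shows "(cmod (nm_run (grover_alg N m1 r (encode M V \<delta>) t) f c 0))\<^sup>2 \<le> 1"
proof -
  let ?P = "\<lambda>x. (cmod (nm_run (grover_alg N m1 r (encode M V \<delta>) t) f x 0))\<^sup>2"
  have "?P c \<le> (\<Sum>x<nstates. ?P x)" using assms by (intro member_le_sum) auto
  also have "\<dots> = 1"
    using sum_sq_nm_run[OF valid_grover_alg, of 0 t f]
    by (simp add: grover_alg_def index_query_def nstates_eq)
  finally show ?thesis .
qed

lemma set_outcome_subset_answered:
  assumes "xs \<in> outcomes (sum_alg J)" "outcome_prob (sum_alg J) f xs \<noteq> 0"
  shows "set xs \<subseteq> answered"
proof
  fix x assume "x \<in> set xs"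
  then obtain l where l: "l < q_k (sum_alg J)" "x = xs ! l"
    using assms(1) by (auto simp: outcomes_eq_Pi_list Pi_list_def in_set_conv_nth)
  then have x: "x < nstates"
    using assms(1) q_qubits_sum_alg[OF l(1)] by (auto simp: outcomes_eq_Pi_list Pi_list_def nstates_eq)
  obtain t where t: "q_algs (sum_alg J) ! l = grover_alg N m1 r (encode M V \<delta>) t"
    using set_sum_alg[OF nth_mem, of l J] l(1) by (auto simp: q_k_def)
  have "(cmod (nm_run (q_algs (sum_alg J) ! l) f x 0))\<^sup>2 \<noteq> 0"
    using outcome_prob_eq_0_if[OF l(1), of f xs] assms(2) l(2) by (auto simp: repeated_grover_def)
  then show "x \<in> answered"
    using x unfolding t sq_nm_run_grover_alg[OF x] by (auto simp: answered_def split: if_splits)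
qed

lemma grover_alg_success_prob:
  assumes i: "i \<in> marked" and j: "2 ^ j \<le> n_marked" "n_marked < 2 ^ (j + 1)"
  shows "success_bound / n_marked
       \<le> (cmod (nm_run (grover_alg N m1 r (encode M V \<delta>) (grover_iters nidx j)) f
                 (marked_outcome i) 0))\<^sup>2"
proof -
  define K where "K = n_marked"
  have "K \<le> N" using n_marked_le_N by (simp add: K_def)
  then have K: "0 < K" "2 * K \<le> nidx" using j two_N_le by (auto simp: K_def nidx_def)
  have i': "i < nidx" "odd (val i)" using i by (auto simp: marked_def)
  define s0 where "s0 = sqrt (2 ^ j / real nidx)"
  have s: "sqrt_marked_frac = sqrt (real K / real nidx)"
    by (simp add: sqrt_marked_frac_def amp0_def K_def real_sqrt_divide)
  have nidx_pos: "0 < real nidx" using nidx_ge_2 by simp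
  have "success_bound \<le> (sin ((2 * real (nat \<lfloor>1 / (8 * s0)\<rfloor>) + 1) * arcsin sqrt_marked_frac))\<^sup>2"
  proof (rule success_bound_le_sin_sq)
    show "0 < s0" using nidx_pos by (simp add: s0_def)
    show "s0 \<le> sqrt_marked_frac"
      unfolding s0_def s using j nidx_pos by (simp add: K_def divide_right_mono real_sqrt_le_mono)
    show "sqrt_marked_frac\<^sup>2 < 2 * s0\<^sup>2"
      unfolding s0_def s using j nidx_pos by (simp add: K_def field_simps)
        (metis of_nat_less_iff of_nat_numeral of_nat_power power_Suc)
    show "sqrt_marked_frac\<^sup>2 \<le> 1/2" unfolding s using K nidx_pos by (simp add: field_simps)
  qed
  then have "success_bound \<le> (sin ((2 * real (grover_iters nidx j) + 1) * theta))\<^sup>2"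
    by (simp add: grover_iters_def s0_def theta_def)
  moreover have "(cmod (nm_run (grover_alg N m1 r (encode M V \<delta>) (grover_iters nidx j)) f
      (marked_outcome i) 0))\<^sup>2
      = (sin ((2 * real (grover_iters nidx j) + 1) * theta))\<^sup>2 / K"
    using sq_nm_run_grover_alg[OF marked_outcome_less[OF i]] grover_iterate_marked_sq[OF _ _ i'] K
    by (simp add: K_def)
  ultimately show ?thesis using K by (simp add: K_def divide_right_mono)
qed

lemma miss_prob_le:
  assumes i: "i \<in> marked" and j: "j \<le> J" "2 ^ j \<le> n_marked" "n_marked < 2 ^ (j + 1)"
  shows "(\<Sum>xs\<in>{xs \<in> outcomes (sum_alg J). marked_outcome i \<notin> set xs}. outcome_prob (sum_alg J) f xs)
       \<le> (1 - success_bound / n_marked) ^ repetitions j"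
proof -
  define P where "P B = (cmod (nm_run B f (marked_outcome i) 0))\<^sup>2" for B
  define stage where "stage j = grover_alg N m1 r (encode M V \<delta>) (grover_iters nidx j)" for j
  have c: "marked_outcome i < 2 ^ (m1 + r)" using marked_outcome_less[OF i] by (simp add: nstates_eq)
  have P01: "0 \<le> 1 - P (stage j) \<and> 1 - P (stage j) \<le> 1" for j
    using sq_nm_run_grover_alg_le_1[OF marked_outcome_less[OF i]] by (simp add: P_def stage_def)
  have "(\<Sum>xs\<in>{xs \<in> outcomes (sum_alg J). marked_outcome i \<notin> set xs}. outcome_prob (sum_alg J) f xs)
      = (\<Prod>l<q_k (sum_alg J). 1 - P (q_algs (sum_alg J) ! l))"
    unfolding P_def
    by (rule sum_outcome_prob_not_in_set[OF valid_sum_alg _ q_qubits_sum_alg c])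
      (simp add: repeated_grover_def)
  also have "\<dots> = prod_list (map (\<lambda>B. 1 - P B) (q_algs (sum_alg J)))"
    by (simp add: q_k_def prod_list_map_eq_prod_nth)
  also have "\<dots> = (\<Prod>j'<Suc J. (1 - P (stage j')) ^ repetitions j')"
    unfolding repeated_grover_def qalg.select_convs prod_list_concat_replicate
    by (simp add: stage_def nidx_def)
  also have "\<dots> \<le> (1 - P (stage j)) ^ repetitions j"
    using j P01 by (intro prod_le_factor) (auto intro: power_le_one)
  also have "\<dots> \<le> (1 - success_bound / n_marked) ^ repetitions j"
    using grover_alg_success_prob[OF i j(2,3)] P01 by (intro power_mono) (auto simp: P_def stage_def)
  finally show ?thesis .
qed

text \<open>A wrong output requires some marked index to be missed by every stage.\<close>

lemma sum_error_prob_le_sum_miss_prob: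
  "(\<Sum>xs\<in>{xs \<in> outcomes (sum_alg J). \<delta> < norm (S_NM' N M f - q_phi (sum_alg J) xs)}.
      outcome_prob (sum_alg J) f xs)
   \<le> (\<Sum>i\<in>marked. \<Sum>xs\<in>{xs \<in> outcomes (sum_alg J). marked_outcome i \<notin> set xs}.
      outcome_prob (sum_alg J) f xs)"
  (is "?err \<le> _")
proof -
  have "?err \<le> (\<Sum>c\<in>marked_outcome ` marked. \<Sum>xs\<in>{xs \<in> outcomes (sum_alg J). c \<notin> set xs}.
      outcome_prob (sum_alg J) f xs)"
  proof (rule sum_le_sum_not_in_set[OF finite_outcomes _ _ outcome_prob_nonneg])
    fix xs
    assume xs: "xs \<in> {xs \<in> outcomes (sum_alg J). \<delta> < norm (S_NM' N M f - q_phi (sum_alg J) xs)}"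
      and "outcome_prob (sum_alg J) f xs \<noteq> 0"
    then have "set xs \<subseteq> answered" by (intro set_outcome_subset_answered) auto
    then show "\<exists>c\<in>marked_outcome ` marked. c \<notin> set xs"
      using xs abs_S_NM'_minus_decode_sum_le[of xs] by (auto simp: repeated_grover_def)
  qed (use finite_marked in auto)
  then show ?thesis by (simp add: sum.reindex[OF inj_on_subset[OF inj_marked_outcome]])
qed

lemma q_err_sum_alg_le:
  assumes "n_marked < 2 ^ (J + 1)"
  shows "q_err (S_NM' N M) (sum_alg J) f \<le> ereal \<delta>"
proof (rule q_err_leI, rule order.trans[OF sum_error_prob_le_sum_miss_prob])
  show "(\<Sum>i\<in>marked. \<Sum>xs\<in>{xs \<in> outcomes (sum_alg J). marked_outcome i \<notin> set xs}.
      outcome_prob (sum_alg J) f xs) \<le> 1/4"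
  proof (cases "n_marked = 0")
    case True
    then show ?thesis using finite_marked by (simp add: n_marked_def)
  next
    case False
    define j where "j = floor_log n_marked"
    have j: "2 ^ j \<le> n_marked" "n_marked < 2 ^ (j + 1)"
      using False floor_log_exp2_le floor_log_exp2_gt by (auto simp: j_def)
    then have "(2::nat) ^ j < 2 ^ (J + 1)" using assms by linarith
    then have "j \<le> J" using power_less_imp_less_exp[of "2::nat" j "J + 1"] by simp
    then have "(\<Sum>i\<in>marked. \<Sum>xs\<in>{xs \<in> outcomes (sum_alg J). marked_outcome i \<notin> set xs}.
        outcome_prob (sum_alg J) f xs) \<le> (\<Sum>i\<in>marked. (1 - success_bound / n_marked) ^ repetitions j)"
      using miss_prob_le j by (intro sum_mono) auto
    also have "\<dots> = real n_marked * (1 - success_bound / n_marked) ^ repetitions j"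
      by (simp add: n_marked_def)
    also have "\<dots> \<le> 1/4"
      using success_bound_pos success_bound_le_1 False j repetitions_ge
      by (intro repetition_miss_bound) auto
    finally show ?thesis .
  qed
qed

lemma n_q_sum_alg_le:
  assumes "1 \<le> R" "R \<le> real N" "2 ^ m1 \<le> 4 * N"
  shows "real (n_q (sum_alg (nat \<lfloor>log 2 R\<rfloor>)))
       \<le> 384 / success_bound * sqrt (real N * R) * max (log 2 R) 1"
proof -
  have "real (2 ^ m1) \<le> real (4 * N)" "real N \<le> real (2 ^ m1)"
    using assms(3) two_N_le by (simp_all only: of_nat_le_iff)
  then show ?thesis
    unfolding n_q_repeated_grover nidx_def using assms(1,2) by (intro query_cost_le) auto
qed

lemma n_marked_mult_le_of_unit_ball:
  assumes "0 < p" "f \<in> unit_ball_Lp p N"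
  shows "real n_marked * real M powr p \<le> real N"
  unfolding n_marked_def marked_eq using assms by (intro card_ge_mult_le_of_unit_ball) auto

end


section \<open>Vanishing minimal query error\<close>

lemma zero_in_unit_ball_Lp: "(\<lambda>_. 0) \<in> unit_ball_Lp p N"
  by (simp add: unit_ball_Lp_def Lp_norm_def)

lemma min_query_err_eq_0_if_zero:
  fixes S :: "('d \<Rightarrow> 'k) \<Rightarrow> 'g::real_normed_vector"
  assumes "d0 \<in> D" "F \<noteq> {}" "\<And>f. f \<in> F \<Longrightarrow> S f = 0"
  shows "min_query_err D n S F = 0"
proof (rule min_query_err_eq_0I[OF assms(2)])
  fix e :: real assume e: "0 < e"
  define Q :: "('d, 'k) qquery" where
    "Q = \<lparr>qm = 2, qm1 = 1, qm2 = 1, qZ = {0}, qtau = (\<lambda>_. d0), qbeta = (\<lambda>_. 0)\<rparr>"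
  define A :: "('d, 'k, 'g) qalg" where
    "A = \<lparr>q_algs = [\<lparr>nm_query = Q, nm_U = [cmat id_mat]\<rparr>], q_b = (\<lambda>_ _. 0), q_phi = (\<lambda>_. 0)\<rparr>"
  have "valid_qalg D A"
    unfolding valid_qalg_def valid_nm_alg_def valid_query_def A_def Q_def q_k_def
    using assms(1) unitary_id_mat by auto
  moreover have "n_q A \<le> n"
    by (simp add: n_q_def q_k_def A_def nm_queries_def)
  moreover have "q_err S A f \<le> ereal e" if "f \<in> F" for f
    by (rule q_err_leI) (use e assms(3)[OF that] in \<open>simp add: A_def\<close>)
  ultimately show "\<exists>A :: ('d, 'k, 'g) qalg. valid_qalg D A \<and> n_q A \<le> n \<and> (\<forall>f\<in>F. q_err S A f \<le> ereal e)"
    by blast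
qed

lemma S_NM'_eq_0_of_unit_ball:
  assumes "0 < p" "f \<in> unit_ball_Lp p N" "1 \<le> M" "real M powr (- p) * real N < 1"
  shows "S_NM' N M f = 0"
proof -
  have pos: "0 < real M powr p" using assms(3) by simp
  have "real (card {i. i < N \<and> real M \<le> \<bar>f i\<bar>}) * real M powr p \<le> real N"
    using assms(1,2) by (intro card_ge_mult_le_of_unit_ball) auto
  also have "\<dots> < 1 * real M powr p"
    using assms(4) pos by (simp add: powr_minus field_simps)
  finally have "card {i. i < N \<and> real M \<le> \<bar>f i\<bar>} = 0"
    using pos by (simp only: mult_less_cancel_right) simp
  then have empty: "{i. i < N \<and> real M \<le> \<bar>f i\<bar>} = {}" by simp
  show ?thesis unfolding S_NM'_def empty by simp
qed

lemma grover_sum_of_unit_ball: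
  assumes "1 \<le> p" "f \<in> unit_ball_Lp p N" "1 \<le> N" "2 * N \<le> 2 ^ m1" "0 < \<delta>"
  shows "grover_sum m1 (nat \<lceil>2 * real N / \<delta>\<rceil> + 2) (\<lambda>i. if i < N then encode M N \<delta> (f i) else 0)
           N M N \<delta> f"
proof unfold_locales
  show "1 \<le> m1" using assms(3,4) by (cases m1) auto
  show "(if i < N then encode M N \<delta> (f i) else 0) < 2 ^ (nat \<lceil>2 * real N / \<delta>\<rceil> + 2)" for i
    using encode_less by simp
  show "\<bar>f i\<bar> \<le> real N" if "i < N" for i
    using abs_le_of_unit_ball[OF assms(1,2) that] .
qed (use assms in auto)

text \<open>The algorithm depends on \<open>\<delta>\<close> only through the number of value qubits, not through its
  number of queries.\<close>

lemma exists_qalg_S_NM':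
  fixes p :: real and N M :: nat
  assumes p: "1 \<le> p" and N: "1 \<le> N" and M: "1 \<le> M" and R: "1 \<le> real M powr (- p) * real N"
    and \<delta>: "0 < \<delta>"
  defines "R \<equiv> real M powr (- p) * real N"
  shows "\<exists>A :: (nat, real, real) qalg. valid_qalg {..<N} A
           \<and> real (n_q A) \<le> 384 / success_bound * sqrt (real N * R) * max (log 2 R) 1
           \<and> (\<forall>f\<in>unit_ball_Lp p N. q_err (S_NM' N M) A f \<le> ereal \<delta>)"
proof -
  define m1 where "m1 = Suc (floor_log (2 * N))"
  have m1: "2 * N \<le> 2 ^ m1" "2 ^ m1 \<le> 4 * N"
    using floor_log_exp2_gt[of "2 * N"] floor_log_exp2_le[of "2 * N"] N by (simp_all add: m1_def)
  define r where "r = nat \<lceil>2 * real N / \<delta>\<rceil> + 2"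
  define J where "J = nat \<lfloor>log 2 R\<rfloor>"
  have inst: "grover_sum m1 r (\<lambda>i. if i < N then encode M N \<delta> (f i) else 0) N M N \<delta> f"
    if "f \<in> unit_ball_Lp p N" for f
    unfolding r_def by (rule grover_sum_of_unit_ball[OF p that N m1(1) \<delta>])
  interpret zero: grover_sum m1 r "\<lambda>i. if i < N then encode M N \<delta> 0 else 0" N M N \<delta> "\<lambda>_. 0"
    using inst[OF zero_in_unit_ball_Lp] by simp
  have M_p: "1 \<le> real M powr p" using M p by (simp add: ge_one_powr_ge_zero)
  have R_eq: "R = real N / real M powr p" by (simp add: R_def powr_minus divide_inverse mult.commute)
  also have "\<dots> \<le> real N" using M_p by (simp add: divide_le_eq mult_le_cancel_left1)
  finally have "R \<le> real N" .
  moreover have "q_err (S_NM' N M) (zero.sum_alg J) f \<le> ereal \<delta>" if f: "f \<in> unit_ball_Lp p N" for f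
  proof -
    interpret grover_sum m1 r "\<lambda>i. if i < N then encode M N \<delta> (f i) else 0" N M N \<delta> f
      by (rule inst[OF f])
    have "real n_marked \<le> R"
      unfolding R_eq using n_marked_mult_le_of_unit_ball[of p] p f M_p M by (simp add: le_divide_eq)
    also have "R < 2 ^ (J + 1)" unfolding J_def by (rule nat_floor_log_bounds(2)[OF R[folded R_def]])
    finally show ?thesis by (intro q_err_sum_alg_le) (metis of_nat_less_numeral_power_cancel_iff)
  qed
  ultimately show ?thesis
    using zero.valid_sum_alg zero.n_q_sum_alg_le[OF R[folded R_def] _ m1(2)] unfolding J_def by blast
qed

lemma min_query_err_S_NM'_eq_0:
  fixes p :: real and n M N :: nat
  assumes p: "1 \<le> p" and M: "1 \<le> M" and N: "1 \<le> N"
  defines "R \<equiv> real M powr (- p) * real N"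
  assumes n: "384 / success_bound * sqrt (real N * R) * max (log 2 R) 1 \<le> real n"
  shows "min_query_err {..<N} n (S_NM' N M) (unit_ball_Lp p N) = 0"
proof (cases "1 \<le> R")
  case True
  show ?thesis
  proof (rule min_query_err_eq_0I)
    fix \<delta> :: real assume "0 < \<delta>"
    then show "\<exists>A. valid_qalg {..<N} A \<and> n_q A \<le> n
                   \<and> (\<forall>f\<in>unit_ball_Lp p N. q_err (S_NM' N M) A f \<le> ereal \<delta>)"
      using exists_qalg_S_NM'[OF p N M True[unfolded R_def]] n unfolding R_def by force
  qed (use zero_in_unit_ball_Lp in blast)
next
  case False
  then show ?thesis
    using p N M zero_in_unit_ball_Lp S_NM'_eq_0_of_unit_ball[of p _ N M]
    by (intro min_query_err_eq_0_if_zero[of 0]) (auto simp: R_def)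
qed

theorem proposition1:
  fixes p :: real
  assumes "1 \<le> p"
  shows "\<exists>c>0. \<forall>n M N :: nat. n \<ge> 1 \<longrightarrow> M \<ge> 1 \<longrightarrow> N \<ge> 1 \<longrightarrow>
           real n \<ge> c * real M powr (- p / 2) * real N
                      * max (log 2 (real M powr (- p) * real N)) 1 \<longrightarrow>
           min_query_err {..<N} n (S_NM' N M) (unit_ball_Lp p N) = 0"
proof (intro exI[of _ "384 / success_bound"] conjI allI impI)
  show "0 < 384 / success_bound" using success_bound_pos by simp
  fix n M N :: nat
  assume "M \<ge> 1" "N \<ge> 1"
    and n: "real n \<ge> 384 / success_bound * real M powr (- p / 2) * real N
                      * max (log 2 (real M powr (- p) * real N)) 1"
  have "sqrt (real N * (real M powr (- p) * real N)) = real N * (real M powr (- p)) powr (1/2)"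
    by (simp add: real_sqrt_mult powr_half_sqrt)
  also have "\<dots> = real M powr (- p / 2) * real N" by (simp add: powr_powr)
  finally show "min_query_err {..<N} n (S_NM' N M) (unit_ball_Lp p N) = 0"
    using min_query_err_S_NM'_eq_0[OF assms \<open>M \<ge> 1\<close> \<open>N \<ge> 1\<close>] n by (simp add: mult_ac)
qed

end
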